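(* Over $\mathrm{IKP}$, the following are equivalent: (i) $\mathrm{PlUb}$ together with the axiom of Exponentiation; (ii) every set has a powerset.
   Context: $\mathrm{IKP}$ is intuitionistic Kripke–Platek set theory (with strong infinity). Exponentiation asserts that for all sets $a,b$ the set $b^a$ of all functions from $a$ to $b$ exists. An ordinal is a transitive set of transitive sets. For sets $\alpha,\gamma$, $\mathrm{relpl}_\alpha(\gamma)$ denotes $\forall \delta \in \gamma\ \forall \varepsilon \in \alpha\,(\varepsilon \subseteq \delta \rightarrow \varepsilon \in \gamma)$. $\mathrm{PlOrd}$ is the class of ordinals $\alpha$ such that for all $\beta \in \alpha$ and all $\gamma \subseteq \beta$ with $\mathrm{relpl}_\alpha(\gamma)$, we have $\gamma \in \alpha$ and $\forall \delta \in \alpha\,(\beta \in \delta \rightarrow \gamma \in \delta)$. $\mathrm{PlUb}$ is the axiom $\forall \alpha \in \mathrm{PlOrd}\ \exists \beta \in \mathrm{PlOrd}\ \alpha \in \beta$. *)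

theory Defs
  imports Main
begin

section \<open>Deep embedding of first-order intuitionistic logic in the language {\<in>, =}\<close>

datatype fm =
    Mem nat nat          (* x \<in> y *)
  | Eq nat nat
  | Bot
  | Conj fm fm
  | Disj fm fm
  | Imp fm fm
  | All nat fm
  | Ex nat fm

fun fv :: "fm \<Rightarrow> nat set" where
  "fv (Mem x y) = {x, y}"
| "fv (Eq x y) = {x, y}"
| "fv Bot = {}"
| "fv (Conj p q) = fv p \<union> fv q"
| "fv (Disj p q) = fv p \<union> fv q"
| "fv (Imp p q) = fv p \<union> fv q"
| "fv (All x p) = fv p - {x}"
| "fv (Ex x p) = fv p - {x}"

text \<open>Replace the free occurrences of variable x by variable y (no renaming).\<close>
fun subst :: "fm \<Rightarrow> nat \<Rightarrow> nat \<Rightarrow> fm" where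
  "subst (Mem u v) x y = Mem (if u = x then y else u) (if v = x then y else v)"
| "subst (Eq u v) x y = Eq (if u = x then y else u) (if v = x then y else v)"
| "subst Bot x y = Bot"
| "subst (Conj p q) x y = Conj (subst p x y) (subst q x y)"
| "subst (Disj p q) x y = Disj (subst p x y) (subst q x y)"
| "subst (Imp p q) x y = Imp (subst p x y) (subst q x y)"
| "subst (All z p) x y = (if z = x then All z p else All z (subst p x y))"
| "subst (Ex z p) x y = (if z = x then Ex z p else Ex z (subst p x y))"

text \<open>y is free for x in the formula (substituting y for x causes no capture).\<close>
fun free_for :: "nat \<Rightarrow> nat \<Rightarrow> fm \<Rightarrow> bool" where
  "free_for y x (Mem u v) = True"
| "free_for y x (Eq u v) = True"
| "free_for y x Bot = True"
| "free_for y x (Conj p q) = (free_for y x p \<and> free_for y x q)"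
| "free_for y x (Disj p q) = (free_for y x p \<and> free_for y x q)"
| "free_for y x (Imp p q) = (free_for y x p \<and> free_for y x q)"
| "free_for y x (All z p) = (x \<notin> fv (All z p) \<or> (z \<noteq> y \<and> free_for y x p))"
| "free_for y x (Ex z p) = (x \<notin> fv (Ex z p) \<or> (z \<noteq> y \<and> free_for y x p))"

inductive deriv :: "fm set \<Rightarrow> fm \<Rightarrow> bool" where
  Assm: "\<phi> \<in> \<Gamma> \<Longrightarrow> deriv \<Gamma> \<phi>"
| BotE: "deriv \<Gamma> Bot \<Longrightarrow> deriv \<Gamma> \<phi>"
| ConjI: "deriv \<Gamma> \<phi> \<Longrightarrow> deriv \<Gamma> \<psi> \<Longrightarrow> deriv \<Gamma> (Conj \<phi> \<psi>)"
| ConjE1: "deriv \<Gamma> (Conj \<phi> \<psi>) \<Longrightarrow> deriv \<Gamma> \<phi>"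
| ConjE2: "deriv \<Gamma> (Conj \<phi> \<psi>) \<Longrightarrow> deriv \<Gamma> \<psi>"
| DisjI1: "deriv \<Gamma> \<phi> \<Longrightarrow> deriv \<Gamma> (Disj \<phi> \<psi>)"
| DisjI2: "deriv \<Gamma> \<psi> \<Longrightarrow> deriv \<Gamma> (Disj \<phi> \<psi>)"
| DisjE: "deriv \<Gamma> (Disj \<phi> \<psi>) \<Longrightarrow> deriv (insert \<phi> \<Gamma>) \<chi> \<Longrightarrow> deriv (insert \<psi> \<Gamma>) \<chi>
          \<Longrightarrow> deriv \<Gamma> \<chi>"
| ImpI: "deriv (insert \<phi> \<Gamma>) \<psi> \<Longrightarrow> deriv \<Gamma> (Imp \<phi> \<psi>)"
| ImpE: "deriv \<Gamma> (Imp \<phi> \<psi>) \<Longrightarrow> deriv \<Gamma> \<phi> \<Longrightarrow> deriv \<Gamma> \<psi>"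
| AllI: "deriv \<Gamma> \<phi> \<Longrightarrow> (\<forall>\<gamma>\<in>\<Gamma>. x \<notin> fv \<gamma>) \<Longrightarrow> deriv \<Gamma> (All x \<phi>)"
| AllE: "deriv \<Gamma> (All x \<phi>) \<Longrightarrow> free_for y x \<phi> \<Longrightarrow> deriv \<Gamma> (subst \<phi> x y)"
| ExI: "deriv \<Gamma> (subst \<phi> x y) \<Longrightarrow> free_for y x \<phi> \<Longrightarrow> deriv \<Gamma> (Ex x \<phi>)"
| ExE: "deriv \<Gamma> (Ex x \<phi>) \<Longrightarrow> deriv (insert \<phi> \<Gamma>) \<psi> \<Longrightarrow> (\<forall>\<gamma>\<in>\<Gamma>. x \<notin> fv \<gamma>)
        \<Longrightarrow> x \<notin> fv \<psi> \<Longrightarrow> deriv \<Gamma> \<psi>"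
| Refl: "deriv \<Gamma> (Eq x x)"
| Leibniz: "deriv \<Gamma> (Eq x y) \<Longrightarrow> deriv \<Gamma> (subst \<phi> z x) \<Longrightarrow> free_for x z \<phi>
           \<Longrightarrow> free_for y z \<phi> \<Longrightarrow> deriv \<Gamma> (subst \<phi> z y)"

definition Iff :: "fm \<Rightarrow> fm \<Rightarrow> fm" where
  "Iff p q = Conj (Imp p q) (Imp q p)"

definition BAll :: "nat \<Rightarrow> nat \<Rightarrow> fm \<Rightarrow> fm" where
  "BAll x a p = All x (Imp (Mem x a) p)"

definition BEx :: "nat \<Rightarrow> nat \<Rightarrow> fm \<Rightarrow> fm" where
  "BEx x a p = Ex x (Conj (Mem x a) p)"

text \<open>A variable name different from all names in the list (used for internal bound variables).\<close>
definition fr :: "nat list \<Rightarrow> nat" where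
  "fr xs = Suc (fold max xs 0)"

definition close :: "fm \<Rightarrow> fm" where
  "close p = foldr All (sorted_list_of_set (fv p)) p"

inductive delta0 :: "fm \<Rightarrow> bool" where
  "delta0 (Mem x y)"
| "delta0 (Eq x y)"
| "delta0 Bot"
| "delta0 p \<Longrightarrow> delta0 q \<Longrightarrow> delta0 (Conj p q)"
| "delta0 p \<Longrightarrow> delta0 q \<Longrightarrow> delta0 (Disj p q)"
| "delta0 p \<Longrightarrow> delta0 q \<Longrightarrow> delta0 (Imp p q)"
| "x \<noteq> a \<Longrightarrow> delta0 p \<Longrightarrow> delta0 (All x (Imp (Mem x a) p))"
| "x \<noteq> a \<Longrightarrow> delta0 p \<Longrightarrow> delta0 (Ex x (Conj (Mem x a) p))"

definition subset_fm :: "nat \<Rightarrow> nat \<Rightarrow> fm" where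
  "subset_fm x a = (let z = fr [x, a] in BAll z x (Mem z a))"

definition is_sing :: "nat \<Rightarrow> nat \<Rightarrow> fm" where
  "is_sing z x = (let w = fr [z, x] in Conj (BAll w z (Eq w x)) (Mem x z))"

definition is_upair :: "nat \<Rightarrow> nat \<Rightarrow> nat \<Rightarrow> fm" where
  "is_upair z x y = (let w = fr [z, x, y] in
     Conj (BAll w z (Disj (Eq w x) (Eq w y))) (Conj (Mem x z) (Mem y z)))"

definition is_pair :: "nat \<Rightarrow> nat \<Rightarrow> nat \<Rightarrow> fm" where    (* p = <x,y> = {{x},{x,y}} *)
  "is_pair p x y = (let z = fr [p, x, y] in
     Conj (BAll z p (Disj (is_sing z x) (is_upair z x y)))
          (Conj (BEx z p (is_sing z x)) (BEx z p (is_upair z x y))))"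

definition is_fun :: "nat \<Rightarrow> nat \<Rightarrow> nat \<Rightarrow> fm" where
  "is_fun f a b = (let x = fr [f, a, b]; y = Suc x; y' = Suc y; p = Suc y'; p' = Suc p in
     Conj (BAll p f (BEx x a (BEx y b (is_pair p x y))))
    (Conj (BAll x a (BEx y b (BEx p f (is_pair p x y))))
          (BAll x a (BAll y b (BAll y' b (BAll p f (BAll p' f
             (Imp (Conj (is_pair p x y) (is_pair p' x y')) (Eq y y')))))))))"

definition is_trans :: "nat \<Rightarrow> fm" where
  "is_trans x = (let y = fr [x]; z = Suc y in BAll y x (BAll z y (Mem z x)))"

definition is_ord :: "nat \<Rightarrow> fm" where
  "is_ord x = (let y = fr [x] in Conj (is_trans x) (BAll y x (is_trans y)))"

definition relpl :: "nat \<Rightarrow> nat \<Rightarrow> fm" where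
  "relpl \<alpha> \<gamma> = (let \<delta> = fr [\<alpha>, \<gamma>]; \<epsilon> = Suc \<delta> in
     BAll \<delta> \<gamma> (BAll \<epsilon> \<alpha> (Imp (subset_fm \<epsilon> \<delta>) (Mem \<epsilon> \<gamma>))))"

definition is_plord :: "nat \<Rightarrow> fm" where
  "is_plord \<alpha> = (let \<beta> = fr [\<alpha>]; \<gamma> = Suc \<beta>; \<delta> = Suc \<gamma> in
     Conj (is_ord \<alpha>)
       (BAll \<beta> \<alpha> (All \<gamma> (Imp (subset_fm \<gamma> \<beta>) (Imp (relpl \<alpha> \<gamma>)
          (Conj (Mem \<gamma> \<alpha>) (BAll \<delta> \<alpha> (Imp (Mem \<beta> \<delta>) (Mem \<gamma> \<delta>)))))))))"

definition PlUb :: fm where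
  "PlUb = All 0 (Imp (is_plord 0) (Ex 1 (Conj (is_plord 1) (Mem 0 1))))"

definition Exponentiation :: fm where
  "Exponentiation = All 0 (All 1 (Ex 2 (All 3 (Iff (Mem 3 2) (is_fun 3 0 1)))))"

definition Powerset :: fm where
  "Powerset = All 0 (Ex 1 (All 2 (Iff (Mem 2 1) (subset_fm 2 0))))"

definition Ext_ax :: fm where
  "Ext_ax = All 0 (All 1 (Imp (All 2 (Iff (Mem 2 0) (Mem 2 1))) (Eq 0 1)))"

definition Pair_ax :: fm where
  "Pair_ax = All 0 (All 1 (Ex 2 (Conj (Mem 0 2) (Mem 1 2))))"

definition Union_ax :: fm where
  "Union_ax = All 0 (Ex 1 (BAll 2 0 (BAll 3 2 (Mem 3 1))))"

text \<open>Ind(a): \<emptyset> \<in> a \<and> \<forall>x\<in>a. x \<union> {x} \<in> a\<close>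
definition is_ind :: "nat \<Rightarrow> fm" where
  "is_ind a = (let x = fr [a]; y = Suc x; z = Suc y in
     Conj (BEx y a (BAll z y Bot))
          (BAll x a (BEx y a (All z (Iff (Mem z y) (Disj (Mem z x) (Eq z x)))))))"

definition SInf_ax :: fm where
  "SInf_ax = Ex 0 (Conj (is_ind 0) (All 1 (Imp (is_ind 1) (subset_fm 0 1))))"

definition Sep_ax :: "fm set" where
  "Sep_ax = {close (All a (Ex b (All x (Iff (Mem x b) (Conj (Mem x a) \<phi>)))))
             | a b x \<phi>. delta0 \<phi> \<and> distinct [a, b, x] \<and> b \<notin> fv \<phi>}"

definition Coll_ax :: "fm set" where
  "Coll_ax = {close (Imp (BAll x a (Ex y \<phi>)) (Ex b (BAll x a (BEx y b \<phi>))))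
             | a b x y \<phi>. delta0 \<phi> \<and> distinct [a, b, x, y] \<and> b \<notin> fv \<phi>}"

definition SetInd_ax :: "fm set" where
  "SetInd_ax = {close (Imp (All a (Imp (BAll x a (subst \<phi> a x)) \<phi>)) (All a \<phi>))
             | a x \<phi>. a \<noteq> x \<and> x \<notin> fv \<phi> \<and> free_for x a \<phi>}"

definition IKP :: "fm set" where
  "IKP = {Ext_ax, Pair_ax, Union_ax, SInf_ax} \<union> Sep_ax \<union> Coll_ax \<union> SetInd_ax"

end

(*
  Functions from a to b are Delta_0-definable subsets of a \<times> b, so Exponentiation
  follows from Powerset by Separation. For a plump ordinal \<alpha>, the relatively plump subsets of \<alpha>,
  {\<gamma> \<in> P(\<alpha>) | relpl_\<alpha>(\<gamma>)}, form a plump ordinal containing \<alpha>; this gives PlUb.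

  The empty set is a plump ordinal, so PlUb provides plump ordinals \<beta> \<ni> 0 and
  \<gamma> \<ni> \<beta>, and plumpness of \<gamma> puts every subset of {0} (every truth value) into \<gamma>. A subset s
  of a is recovered as {x \<in> a | 0 \<in> f x} from its characteristic function f: a \<rightarrow> \<gamma>,
  x \<mapsto> {0 | x \<in> s}. Collection over \<gamma>^a bounds these sets, and Separation cuts out P(a).
*)

theory Submission
  imports Defs
begin

fun bnd :: "fm \<Rightarrow> nat set" where
  "bnd (Mem x y) = {}"
| "bnd (Eq x y) = {}"
| "bnd Bot = {}"
| "bnd (Conj p q) = bnd p \<union> bnd q"
| "bnd (Disj p q) = bnd p \<union> bnd q"
| "bnd (Imp p q) = bnd p \<union> bnd q"
| "bnd (All x p) = insert x (bnd p)"
| "bnd (Ex x p) = insert x (bnd p)"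

fun unshadowed :: "fm \<Rightarrow> bool" where
  "unshadowed (Mem x y) = True"
| "unshadowed (Eq x y) = True"
| "unshadowed Bot = True"
| "unshadowed (Conj p q) = (unshadowed p \<and> unshadowed q)"
| "unshadowed (Disj p q) = (unshadowed p \<and> unshadowed q)"
| "unshadowed (Imp p q) = (unshadowed p \<and> unshadowed q)"
| "unshadowed (All x p) = (x \<notin> bnd p \<and> unshadowed p)"
| "unshadowed (Ex x p) = (x \<notin> bnd p \<and> unshadowed p)"

fun rename :: "(nat \<Rightarrow> nat) \<Rightarrow> (nat \<Rightarrow> nat) \<Rightarrow> fm \<Rightarrow> fm" where
  "rename g r (Mem x y) = Mem (r x) (r y)"
| "rename g r (Eq x y) = Eq (r x) (r y)"
| "rename g r Bot = Bot"
| "rename g r (Conj p q) = Conj (rename g r p) (rename g r q)"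
| "rename g r (Disj p q) = Disj (rename g r p) (rename g r q)"
| "rename g r (Imp p q) = Imp (rename g r p) (rename g r q)"
| "rename g r (All x p) = All (g x) (rename g (r(x := g x)) p)"
| "rename g r (Ex x p) = Ex (g x) (rename g (r(x := g x)) p)"

definition fv_set :: "fm set \<Rightarrow> nat set" where
  "fv_set \<Gamma> = \<Union> (fv ` \<Gamma>)"

lemma fv_set_insert[simp]: "fv_set (insert p \<Gamma>) = fv p \<union> fv_set \<Gamma>"
  by (auto simp: fv_set_def)

lemma fv_set_Un[simp]: "fv_set (A \<union> B) = fv_set A \<union> fv_set B"
  by (auto simp: fv_set_def)

lemma finite_fv[simp]: "finite (fv p)"
  by (induction p) auto

lemma finite_bnd[simp]: "finite (bnd p)"
  by (induction p) auto

lemma subst_same[simp]: "subst p x x = p"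
  by (induction p) auto

lemma subst_nofv: "x \<notin> fv p \<Longrightarrow> subst p x y = p"
  by (induction p) auto

lemma free_for_same[simp]: "free_for x x p"
  by (induction p) auto

lemma free_for_nobnd: "y \<notin> bnd p \<Longrightarrow> free_for y x p"
  by (induction p) auto

lemma fv_subst_sub: "fv (subst p x y) \<subseteq> (fv p - {x}) \<union> {y}"
  by (induction p) auto

lemma fv_foldr_All: "fv (foldr All xs p) = fv p - set xs"
  by (induction xs) auto

lemma fv_close[simp]: "fv (close p) = {}"
  by (simp add: close_def fv_foldr_All)

lemma deriv_unfoldr: "deriv \<Gamma> (foldr All xs p) \<Longrightarrow> deriv \<Gamma> p"
proof (induction xs)
  case Nil then show ?case by simp
next
  case (Cons x xs)
  then have "deriv \<Gamma> (All x (foldr All xs p))" by simp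
  then have "deriv \<Gamma> (subst (foldr All xs p) x x)"
    by (rule deriv.AllE) simp
  then show ?case using Cons by simp
qed

lemma deriv_unclose: "deriv \<Gamma> (close p) \<Longrightarrow> deriv \<Gamma> p"
  unfolding close_def by (rule deriv_unfoldr)

lemma fv_set_IKP[simp]: "fv_set IKP = {}"
  unfolding fv_set_def IKP_def Sep_ax_def Coll_ax_def SetInd_ax_def
  by (auto simp: Ext_ax_def Pair_ax_def Union_ax_def SInf_ax_def Iff_def BAll_def BEx_def
      subset_fm_def is_ind_def Let_def fr_def)

section \<open>Renaming of bound variables\<close>

lemma id_upd_same[simp]: "id(x := x) = id"
  by auto

lemma rename_id_gen: "(\<forall>v. g v = v) \<Longrightarrow> (\<forall>v. r v = v) \<Longrightarrow> rename g r p = p"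
  by (induction p arbitrary: r) auto

lemma rename_id[simp]: "rename id id p = p"
  by (rule rename_id_gen) auto

lemma bnd_rename[simp]: "bnd (rename g r p) = g ` bnd p"
  by (induction p arbitrary: r) auto

lemma fv_rename_subset: "fv (rename g r p) \<subseteq> r ` fv p"
proof (induction p arbitrary: r)
  case (All x p)
  show ?case
  proof
    fix y assume "y \<in> fv (rename g r (All x p))"
    then have y: "y \<in> fv (rename g (r(x := g x)) p)" "y \<noteq> g x" by auto
    then obtain v where "v \<in> fv p" "y = (r(x := g x)) v" using All[of "r(x := g x)"] by blast
    then show "y \<in> r ` fv (All x p)" using y by (cases "v = x") auto
  qed
next
  case (Ex x p)
  show ?case
  proof
    fix y assume "y \<in> fv (rename g r (Ex x p))"
    then have y: "y \<in> fv (rename g (r(x := g x)) p)" "y \<noteq> g x" by auto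
    then obtain v where "v \<in> fv p" "y = (r(x := g x)) v" using Ex[of "r(x := g x)"] by blast
    then show "y \<in> r ` fv (Ex x p)" using y by (cases "v = x") auto
  qed
next
  case (Conj p q) then show ?case using Conj.IH[of r] by fastforce
next
  case (Disj p q) then show ?case using Disj.IH[of r] by fastforce
next
  case (Imp p q) then show ?case using Imp.IH[of r] by fastforce
qed auto

lemma rename_subst:
  assumes "a \<notin> g ` bnd p"
    and "\<forall>v\<in>fv p. r v = a \<longrightarrow> r' v = b"
    and "\<forall>v\<in>fv p. r v \<noteq> a \<longrightarrow> r' v = r v"
  shows "subst (rename g r p) a b = rename g r' p"
  using assms
proof (induction p arbitrary: r r')
  case (All x p)
  have "subst (rename g (r(x := g x)) p) a b = rename g (r'(x := g x)) p"
    by (rule All.IH) (use All.prems in auto)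
  then show ?case using All.prems by auto
next
  case (Ex x p)
  have "subst (rename g (r(x := g x)) p) a b = rename g (r'(x := g x)) p"
    by (rule Ex.IH) (use Ex.prems in auto)
  then show ?case using Ex.prems by auto
next
  case (Conj p q)
  have "subst (rename g r p) a b = rename g r' p" by (rule Conj.IH(1)) (use Conj.prems in auto)
  moreover have "subst (rename g r q) a b = rename g r' q" by (rule Conj.IH(2)) (use Conj.prems in auto)
  ultimately show ?case by simp
next
  case (Disj p q)
  have "subst (rename g r p) a b = rename g r' p" by (rule Disj.IH(1)) (use Disj.prems in auto)
  moreover have "subst (rename g r q) a b = rename g r' q" by (rule Disj.IH(2)) (use Disj.prems in auto)
  ultimately show ?case by simp
next
  case (Imp p q)
  have "subst (rename g r p) a b = rename g r' p" by (rule Imp.IH(1)) (use Imp.prems in auto)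
  moreover have "subst (rename g r q) a b = rename g r' q" by (rule Imp.IH(2)) (use Imp.prems in auto)
  ultimately show ?case by simp
qed auto

text \<open>Under \<open>alpha_cond \<Gamma> g f r1 r2 p\<close>, the variants of \<open>p\<close> whose bound variables are renamed by \<open>g\<close>
  and by \<open>f\<close> (free variables by \<open>r1\<close> and \<open>r2\<close>, which agree on \<open>fv p\<close>) are interderivable over \<open>\<Gamma>\<close>:
  the new binder names are injective, disjoint from each other, and fresh.\<close>

definition alpha_cond :: "fm set \<Rightarrow> (nat \<Rightarrow> nat) \<Rightarrow> (nat \<Rightarrow> nat) \<Rightarrow> (nat \<Rightarrow> nat) \<Rightarrow> (nat \<Rightarrow> nat) \<Rightarrow> fm \<Rightarrow> bool" where
  "alpha_cond \<Gamma> g f r1 r2 p \<longleftrightarrow> unshadowed p \<and> inj_on g (bnd p) \<and> inj_on f (bnd p) \<and> g ` bnd p \<inter> f ` bnd p = {}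
     \<and> (\<forall>v\<in>fv p. r1 v = r2 v) \<and> (g ` bnd p \<union> f ` bnd p) \<inter> (fv_set \<Gamma> \<union> r1 ` fv p) = {}"

lemma alpha_cond_sym: "alpha_cond \<Gamma> g f r1 r2 p \<Longrightarrow> alpha_cond \<Gamma> f g r2 r1 p"
  unfolding alpha_cond_def
proof (elim conjE, intro conjI)
  assume "\<forall>v\<in>fv p. r1 v = r2 v"
  then have "r2 ` fv p = r1 ` fv p" by (auto simp: image_def)
  moreover assume "(g ` bnd p \<union> f ` bnd p) \<inter> (fv_set \<Gamma> \<union> r1 ` fv p) = {}"
  ultimately show "(f ` bnd p \<union> g ` bnd p) \<inter> (fv_set \<Gamma> \<union> r2 ` fv p) = {}" by auto
qed auto

lemma alpha_cond_subformula:
  assumes "alpha_cond \<Gamma> g f r1 r2 P" "unshadowed p" "bnd p \<subseteq> bnd P" "fv p \<subseteq> fv P"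
    and "fv_set \<Gamma>' \<subseteq> fv_set \<Gamma> \<union> r1 ` fv P"
  shows "alpha_cond \<Gamma>' g f r1 r2 p"
proof -
  have a: "g ` bnd p \<union> f ` bnd p \<subseteq> g ` bnd P \<union> f ` bnd P" using assms(3) by auto
  have b: "fv_set \<Gamma>' \<union> r1 ` fv p \<subseteq> fv_set \<Gamma> \<union> r1 ` fv P" using assms(4,5) by auto
  have c: "(g ` bnd P \<union> f ` bnd P) \<inter> (fv_set \<Gamma> \<union> r1 ` fv P) = {}" using assms(1) unfolding alpha_cond_def by blast
  have d: "g ` bnd p \<inter> f ` bnd p = {}" using assms(1,3) unfolding alpha_cond_def by blast
  have e: "inj_on g (bnd P)" "inj_on f (bnd P)" "\<forall>v\<in>fv P. r1 v = r2 v"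
    using assms(1) unfolding alpha_cond_def by blast+
  show ?thesis unfolding alpha_cond_def
  proof (intro conjI)
    show "unshadowed p" by fact
    show "inj_on g (bnd p)" using e(1) assms(3) by (rule inj_on_subset)
    show "inj_on f (bnd p)" using e(2) assms(3) by (rule inj_on_subset)
    show "g ` bnd p \<inter> f ` bnd p = {}" by fact
    show "\<forall>v\<in>fv p. r1 v = r2 v" using e(3) assms(4) by blast
    have "(g ` bnd p \<union> f ` bnd p) \<inter> (fv_set \<Gamma>' \<union> r1 ` fv p) \<subseteq>
      (g ` bnd P \<union> f ` bnd P) \<inter> (fv_set \<Gamma> \<union> r1 ` fv P)" using a b by (rule Int_mono)
    then show "(g ` bnd p \<union> f ` bnd p) \<inter> (fv_set \<Gamma>' \<union> r1 ` fv p) = {}" using c by blast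
  qed
qed

lemma fv_rename_alpha_cond:
  assumes "alpha_cond \<Gamma> g f r1 r2 p"
  shows "fv (rename g r1 p) \<subseteq> r1 ` fv p" "fv (rename f r2 p) \<subseteq> r1 ` fv p"
proof -
  show "fv (rename g r1 p) \<subseteq> r1 ` fv p" by (rule fv_rename_subset)
  have "r2 ` fv p = r1 ` fv p" using assms unfolding alpha_cond_def by (auto simp: image_def)
  then show "fv (rename f r2 p) \<subseteq> r1 ` fv p" using fv_rename_subset[of f r2 p] by simp
qed

lemma Int_empty_if_fresh: "B \<subseteq> B' \<Longrightarrow> B' \<inter> F = {} \<Longrightarrow> a \<notin> B \<Longrightarrow> X \<subseteq> F \<union> {a} \<Longrightarrow> B \<inter> X = {}"
  by blast

lemma deriv_alpha_imp:
  "alpha_cond \<Gamma> g f r1 r2 p \<Longrightarrow> deriv \<Gamma> (Imp (rename g r1 p) (rename f r2 p))"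
proof (induction p arbitrary: \<Gamma> g f r1 r2)
  case (Mem x y)
  then have "r1 x = r2 x" "r1 y = r2 y" by (auto simp: alpha_cond_def)
  then show ?case by (auto intro!: deriv.ImpI intro: deriv.Assm)
next
  case (Eq x y)
  then have "r1 x = r2 x" "r1 y = r2 y" by (auto simp: alpha_cond_def)
  then show ?case by (auto intro!: deriv.ImpI intro: deriv.Assm)
next
  case Bot
  then show ?case by (auto intro!: deriv.ImpI intro: deriv.Assm)
next
  case (Conj p q)
  let ?S = "rename g r1 (Conj p q)"
  let ?G1 = "insert ?S \<Gamma>"
  have fS: "fv ?S \<subseteq> r1 ` fv (Conj p q)" by (rule fv_rename_alpha_cond(1)[OF Conj.prems])
  have cp: "alpha_cond ?G1 g f r1 r2 p"
    by (rule alpha_cond_subformula[OF Conj.prems]) (use Conj.prems fS in \<open>auto simp: alpha_cond_def\<close>)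
  have cq: "alpha_cond ?G1 g f r1 r2 q"
    by (rule alpha_cond_subformula[OF Conj.prems]) (use Conj.prems fS in \<open>auto simp: alpha_cond_def\<close>)
  have S: "deriv ?G1 ?S" by (rule deriv.Assm) simp
  have "deriv ?G1 (rename g r1 p)" using deriv.ConjE1[of ?G1 "rename g r1 p" "rename g r1 q"] S by simp
  then have 1: "deriv ?G1 (rename f r2 p)" by (rule deriv.ImpE[OF Conj.IH(1)[OF cp]])
  have "deriv ?G1 (rename g r1 q)" using deriv.ConjE2[of ?G1 "rename g r1 p" "rename g r1 q"] S by simp
  then have 2: "deriv ?G1 (rename f r2 q)" by (rule deriv.ImpE[OF Conj.IH(2)[OF cq]])
  show ?case using deriv.ConjI[OF 1 2] by (auto intro: deriv.ImpI)
next
  case (Disj p q)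
  let ?S = "rename g r1 (Disj p q)"
  let ?G1 = "insert ?S \<Gamma>"
  have fS: "fv ?S \<subseteq> r1 ` fv (Disj p q)" by (rule fv_rename_alpha_cond(1)[OF Disj.prems])
  have S: "deriv ?G1 ?S" by (rule deriv.Assm) simp
  let ?G2 = "insert (rename g r1 p) ?G1"
  let ?G3 = "insert (rename g r1 q) ?G1"
  have fp: "fv (rename g r1 p) \<subseteq> r1 ` fv (Disj p q)" using fv_rename_subset[of g r1 p] by auto
  have fq: "fv (rename g r1 q) \<subseteq> r1 ` fv (Disj p q)" using fv_rename_subset[of g r1 q] by auto
  have cp: "alpha_cond ?G2 g f r1 r2 p"
    by (rule alpha_cond_subformula[OF Disj.prems]) (use Disj.prems fS fp in \<open>auto simp: alpha_cond_def\<close>)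
  have cq: "alpha_cond ?G3 g f r1 r2 q"
    by (rule alpha_cond_subformula[OF Disj.prems]) (use Disj.prems fS fq in \<open>auto simp: alpha_cond_def\<close>)
  have 1: "deriv ?G2 (rename f r2 (Disj p q))"
    using deriv.ImpE[OF Disj.IH(1)[OF cp] deriv.Assm] by (auto intro: deriv.DisjI1)
  have 2: "deriv ?G3 (rename f r2 (Disj p q))"
    using deriv.ImpE[OF Disj.IH(2)[OF cq] deriv.Assm] by (auto intro: deriv.DisjI2)
  have "deriv ?G1 (rename f r2 (Disj p q))"
    by (rule deriv.DisjE[OF _ 1 2]) (use S in simp)
  then show ?case by (rule deriv.ImpI)
next
  case (Imp p q)
  let ?S = "rename g r1 (Imp p q)"
  let ?G1 = "insert ?S \<Gamma>"
  let ?Tp = "rename f r2 p"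
  let ?G2 = "insert ?Tp ?G1"
  have fS: "fv ?S \<subseteq> r1 ` fv (Imp p q)" by (rule fv_rename_alpha_cond(1)[OF Imp.prems])
  have r12: "r2 ` fv p = r1 ` fv p" using Imp.prems unfolding alpha_cond_def by (auto simp: image_def)
  have fT: "fv ?Tp \<subseteq> r1 ` fv (Imp p q)" using fv_rename_subset[of f r2 p] r12 by auto
  have cp: "alpha_cond ?G2 g f r1 r2 p"
    by (rule alpha_cond_subformula[OF Imp.prems]) (use Imp.prems fS fT in \<open>auto simp: alpha_cond_def\<close>)
  have cq: "alpha_cond ?G2 g f r1 r2 q"
    by (rule alpha_cond_subformula[OF Imp.prems]) (use Imp.prems fS fT in \<open>auto simp: alpha_cond_def\<close>)
  have Sp: "deriv ?G2 (rename g r1 p)"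
    by (rule deriv.ImpE[OF Imp.IH(1)[OF alpha_cond_sym[OF cp]]]) (rule deriv.Assm, simp)
  have Sq: "deriv ?G2 (rename g r1 q)"
    by (rule deriv.ImpE[OF _ Sp]) (rule deriv.Assm, simp)
  have "deriv ?G2 (rename f r2 q)" by (rule deriv.ImpE[OF Imp.IH(2)[OF cq] Sq])
  then show ?case by (auto intro!: deriv.ImpI)
next
  case (All x p)
  let ?gx = "g x" and ?fx = "f x"
  let ?Sb = "rename g (r1(x := ?gx)) p"
  let ?S = "All ?gx ?Sb"
  let ?G1 = "insert ?S \<Gamma>"
  have A: "alpha_cond \<Gamma> g f r1 r2 (All x p)" by fact
  have cl: "unshadowed p" "x \<notin> bnd p" using A unfolding alpha_cond_def unshadowed.simps by blast+
  have ig: "inj_on g (insert x (bnd p))" using A unfolding alpha_cond_def bnd.simps by blast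
  have if': "inj_on f (insert x (bnd p))" using A unfolding alpha_cond_def bnd.simps by blast
  have dj: "g ` insert x (bnd p) \<inter> f ` insert x (bnd p) = {}" using A unfolding alpha_cond_def bnd.simps by blast
  have eq: "\<forall>v\<in>fv p - {x}. r1 v = r2 v" using A unfolding alpha_cond_def fv.simps by blast
  have fr: "(g ` insert x (bnd p) \<union> f ` insert x (bnd p)) \<inter> (fv_set \<Gamma> \<union> r1 ` (fv p - {x})) = {}"
    using A unfolding alpha_cond_def bnd.simps fv.simps by blast
  have gx_nb: "?gx \<notin> g ` bnd p" using ig cl unfolding inj_on_def by blast
  have fx_nb: "?fx \<notin> f ` bnd p" using if' cl unfolding inj_on_def by blast
  have fx_ng: "?fx \<notin> g ` bnd p" using dj by blast
  have gx1: "?gx \<notin> fv_set \<Gamma> \<union> r1 ` (fv p - {x})" using fr by blast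
  have fx1: "?fx \<notin> fv_set \<Gamma> \<union> r1 ` (fv p - {x})" using fr by blast
  have fS: "fv ?S \<subseteq> r1 ` (fv p - {x})" using fv_rename_alpha_cond(1)[OF A] by (simp only: rename.simps fv.simps)
  have S: "deriv ?G1 ?S" by (rule deriv.Assm) simp
  have "deriv ?G1 (subst ?Sb ?gx ?fx)"
    by (rule deriv.AllE[OF S]) (rule free_for_nobnd, use fx_ng in simp)
  moreover have "subst ?Sb ?gx ?fx = rename g (r1(x := ?fx)) p"
  proof (rule rename_subst)
    show "?gx \<notin> g ` bnd p" by (fact gx_nb)
    show "\<forall>v\<in>fv p. (r1(x := ?gx)) v = ?gx \<longrightarrow> (r1(x := ?fx)) v = ?fx"
    proof (intro ballI impI)
      fix v assume v: "v \<in> fv p" "(r1(x := ?gx)) v = ?gx"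
      show "(r1(x := ?fx)) v = ?fx"
      proof (cases "v = x")
        case False
        then have "r1 v = ?gx" using v by simp
        moreover have "r1 v \<in> r1 ` (fv p - {x})" using v False by blast
        ultimately show ?thesis using gx1 by simp
      qed simp
    qed
    show "\<forall>v\<in>fv p. (r1(x := ?gx)) v \<noteq> ?gx \<longrightarrow> (r1(x := ?fx)) v = (r1(x := ?gx)) v"
      by simp
  qed
  ultimately have Sb': "deriv ?G1 (rename g (r1(x := ?fx)) p)" by simp
  have c: "alpha_cond ?G1 g f (r1(x := ?fx)) (r2(x := ?fx)) p"
    unfolding alpha_cond_def
  proof (intro conjI)
    show "\<forall>v\<in>fv p. (r1(x := ?fx)) v = (r2(x := ?fx)) v" using eq by auto
    have B1: "g ` bnd p \<union> f ` bnd p \<subseteq> g ` insert x (bnd p) \<union> f ` insert x (bnd p)" by auto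
    have fxB: "?fx \<notin> g ` bnd p \<union> f ` bnd p" using fx_nb fx_ng by blast
    have "fv_set ?G1 \<subseteq> fv_set \<Gamma> \<union> r1 ` (fv p - {x})" using fS by (simp only: fv_set_insert) blast
    moreover have "(r1(x := ?fx)) ` fv p \<subseteq> insert ?fx (r1 ` (fv p - {x}))" by auto
    ultimately have "fv_set ?G1 \<union> (r1(x := ?fx)) ` fv p \<subseteq> fv_set \<Gamma> \<union> r1 ` (fv p - {x}) \<union> {?fx}" by blast
    then show "(g ` bnd p \<union> f ` bnd p) \<inter> (fv_set ?G1 \<union> (r1(x := ?fx)) ` fv p) = {}"
      by (rule Int_empty_if_fresh[OF B1 fr fxB])
    show "unshadowed p" by (fact cl)
    show "inj_on g (bnd p)" using ig by (rule inj_on_subset) blast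
    show "inj_on f (bnd p)" using if' by (rule inj_on_subset) blast
    show "g ` bnd p \<inter> f ` bnd p = {}" using dj by blast
  qed
  have T: "deriv ?G1 (rename f (r2(x := ?fx)) p)" by (rule deriv.ImpE[OF All.IH[OF c] Sb'])
  have "?fx \<notin> fv_set ?G1" using fx1 fS by (simp only: fv_set_insert) blast
  then have "deriv ?G1 (All ?fx (rename f (r2(x := ?fx)) p))"
    using deriv.AllI[OF T] by (simp add: fv_set_def)
  then show ?case by (auto intro: deriv.ImpI)
next
  case (Ex x p)
  let ?gx = "g x" and ?fx = "f x"
  let ?Sb = "rename g (r1(x := ?gx)) p"
  let ?S = "Ex ?gx ?Sb"
  let ?Tb = "rename f (r2(x := ?fx)) p"
  let ?T = "Ex ?fx ?Tb"
  let ?G1 = "insert ?S \<Gamma>"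
  let ?G2 = "insert ?Sb ?G1"
  have A: "alpha_cond \<Gamma> g f r1 r2 (Ex x p)" by fact
  have cl: "unshadowed p" "x \<notin> bnd p" using A unfolding alpha_cond_def unshadowed.simps by blast+
  have ig: "inj_on g (insert x (bnd p))" using A unfolding alpha_cond_def bnd.simps by blast
  have if': "inj_on f (insert x (bnd p))" using A unfolding alpha_cond_def bnd.simps by blast
  have dj: "g ` insert x (bnd p) \<inter> f ` insert x (bnd p) = {}" using A unfolding alpha_cond_def bnd.simps by blast
  have eq: "\<forall>v\<in>fv p - {x}. r1 v = r2 v" using A unfolding alpha_cond_def fv.simps by blast
  have fr: "(g ` insert x (bnd p) \<union> f ` insert x (bnd p)) \<inter> (fv_set \<Gamma> \<union> r1 ` (fv p - {x})) = {}"
    using A unfolding alpha_cond_def bnd.simps fv.simps by blast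
  have gx_nb: "?gx \<notin> g ` bnd p" using ig cl unfolding inj_on_def by blast
  have fx_nb: "?fx \<notin> f ` bnd p" using if' cl unfolding inj_on_def by blast
  have gx_nf: "?gx \<notin> f ` bnd p" using dj by blast
  have gx1: "?gx \<notin> fv_set \<Gamma> \<union> r1 ` (fv p - {x})" using fr by blast
  have fx1: "?fx \<notin> fv_set \<Gamma> \<union> r1 ` (fv p - {x})" using fr by blast
  have fS: "fv ?S \<subseteq> r1 ` (fv p - {x})" using fv_rename_alpha_cond(1)[OF A] by (simp only: rename.simps fv.simps)
  have fT: "fv ?T \<subseteq> r1 ` (fv p - {x})" using fv_rename_alpha_cond(2)[OF A] by (simp only: rename.simps fv.simps)
  have fSb0: "fv ?Sb \<subseteq> (r1(x := ?gx)) ` fv p" by (rule fv_rename_subset)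
  have up: "(r1(x := ?gx)) ` fv p \<subseteq> insert ?gx (r1 ` (fv p - {x}))" by auto
  have fSb: "fv ?Sb \<subseteq> insert ?gx (r1 ` (fv p - {x}))" using fSb0 up by (rule subset_trans)
  have c: "alpha_cond ?G2 g f (r1(x := ?gx)) (r2(x := ?gx)) p"
    unfolding alpha_cond_def
  proof (intro conjI)
    show "\<forall>v\<in>fv p. (r1(x := ?gx)) v = (r2(x := ?gx)) v" using eq by simp
    have B1: "g ` bnd p \<union> f ` bnd p \<subseteq> g ` insert x (bnd p) \<union> f ` insert x (bnd p)" by auto
    have gxB: "?gx \<notin> g ` bnd p \<union> f ` bnd p" using gx_nb gx_nf by blast
    have "fv_set ?G2 \<subseteq> fv_set \<Gamma> \<union> r1 ` (fv p - {x}) \<union> {?gx}" using fS fSb by (simp only: fv_set_insert) blast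
    then have "fv_set ?G2 \<union> (r1(x := ?gx)) ` fv p \<subseteq> fv_set \<Gamma> \<union> r1 ` (fv p - {x}) \<union> {?gx}" using up by blast
    then show "(g ` bnd p \<union> f ` bnd p) \<inter> (fv_set ?G2 \<union> (r1(x := ?gx)) ` fv p) = {}"
      by (rule Int_empty_if_fresh[OF B1 fr gxB])
    show "unshadowed p" by (fact cl)
    show "inj_on g (bnd p)" using ig by (rule inj_on_subset) blast
    show "inj_on f (bnd p)" using if' by (rule inj_on_subset) blast
    show "g ` bnd p \<inter> f ` bnd p = {}" using dj by blast
  qed
  have Tb': "deriv ?G2 (rename f (r2(x := ?gx)) p)"
    by (rule deriv.ImpE[OF Ex.IH[OF c]]) (rule deriv.Assm, rule insertI1)
  have "subst ?Tb ?fx ?gx = rename f (r2(x := ?gx)) p"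
  proof (rule rename_subst)
    show "?fx \<notin> f ` bnd p" by (fact fx_nb)
    show "\<forall>v\<in>fv p. (r2(x := ?fx)) v = ?fx \<longrightarrow> (r2(x := ?gx)) v = ?gx"
    proof (intro ballI impI)
      fix v assume v: "v \<in> fv p" "(r2(x := ?fx)) v = ?fx"
      show "(r2(x := ?gx)) v = ?gx"
      proof (cases "v = x")
        case False
        then have "r2 v = ?fx" using v by simp
        moreover have "r1 v = r2 v" using eq v False by blast
        moreover have "r1 v \<in> r1 ` (fv p - {x})" using v False by blast
        ultimately show ?thesis using fx1 by simp
      qed simp
    qed
    show "\<forall>v\<in>fv p. (r2(x := ?fx)) v \<noteq> ?fx \<longrightarrow> (r2(x := ?gx)) v = (r2(x := ?fx)) v"
      by simp
  qed
  with Tb' have "deriv ?G2 (subst ?Tb ?fx ?gx)" by simp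
  then have T2: "deriv ?G2 ?T"
    by (rule deriv.ExI) (rule free_for_nobnd, use gx_nf in simp)
  have S1: "deriv ?G1 ?S" by (rule deriv.Assm) (rule insertI1)
  have G1: "\<forall>\<gamma>\<in>?G1. ?gx \<notin> fv \<gamma>"
  proof -
    have "?gx \<notin> fv_set ?G1" using gx1 fS by (simp only: fv_set_insert) blast
    then show ?thesis unfolding fv_set_def by blast
  qed
  have N: "?gx \<notin> fv ?T" using gx1 fT by blast
  have "deriv ?G1 ?T" by (rule deriv.ExE[OF S1 T2 G1 N])
  then show ?case unfolding rename.simps by (rule deriv.ImpI)
qed

lemma deriv_alpha:
  assumes D: "deriv \<Gamma> p" and cl: "unshadowed p" and inj: "inj_on f (bnd p)"
    and fr: "(bnd p \<union> f ` bnd p) \<inter> (fv_set \<Gamma> \<union> fv p) = {}" and fin: "finite (fv_set \<Gamma>)"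
  shows "deriv \<Gamma> (rename f id p)"
proof -
  define M where "M = fv_set \<Gamma> \<union> fv p \<union> bnd p \<union> f ` bnd p"
  have finM: "finite M" using fin by (simp add: M_def)
  define K where "K = Suc (Max (insert 0 M))"
  have Kbig: "v < K" if "v \<in> M" for v
    using that finM unfolding K_def by (simp add: le_imp_less_Suc)
  define h where "h = (\<lambda>v::nat. v + K)"
  have hK: "h v \<ge> K" for v by (simp add: h_def)
  have hinj: "inj_on h A" for A by (auto simp: h_def inj_on_def)
  have h1: "h ` bnd p \<inter> M = {}"
  proof (rule ccontr)
    assume "h ` bnd p \<inter> M \<noteq> {}"
    then obtain v where "v \<in> M" "v \<in> h ` bnd p" by blast
    then show False using hK[of "inv_into (bnd p) h v"] Kbig[of v]
      by (metis f_inv_into_f not_less)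
  qed
  have c1: "alpha_cond \<Gamma> id h id id p"
    unfolding alpha_cond_def
  proof (intro conjI)
    show "id ` bnd p \<inter> h ` bnd p = {}" using h1 by (auto simp: M_def)
    show "(id ` bnd p \<union> h ` bnd p) \<inter> (fv_set \<Gamma> \<union> id ` fv p) = {}" using h1 fr by (auto simp: M_def)
  qed (use cl hinj in auto)
  have s1: "deriv \<Gamma> (rename h id p)" using deriv.ImpE[OF deriv_alpha_imp[OF c1]] D by simp
  have c2: "alpha_cond \<Gamma> h f id id p"
    unfolding alpha_cond_def
  proof (intro conjI)
    show "h ` bnd p \<inter> f ` bnd p = {}" using h1 by (auto simp: M_def)
    show "(h ` bnd p \<union> f ` bnd p) \<inter> (fv_set \<Gamma> \<union> id ` fv p) = {}" using h1 fr by (auto simp: M_def)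
  qed (use cl hinj inj in auto)
  show ?thesis using deriv.ImpE[OF deriv_alpha_imp[OF c2] s1] .
qed

section \<open>Derivations from IKP and a list of hypotheses\<close>

declare insert_Diff_if[simp] Un_insert_left[simp] Un_insert_right[simp]

definition proves :: "fm list \<Rightarrow> fm \<Rightarrow> bool" where
  "proves hs p \<longleftrightarrow> deriv (set hs \<union> IKP) p"

definition fv_list :: "fm list \<Rightarrow> nat set" where
  "fv_list hs = \<Union> (fv ` set hs)"

lemma fv_list_simps[simp]:
  "fv_list [] = {}" "fv_list (h # hs) = fv h \<union> fv_list hs" "fv_list (hs @ ks) = fv_list hs \<union> fv_list ks"
  by (auto simp: fv_list_def)

lemma finite_fv_list: "finite (fv_list hs)"
  by (simp add: fv_list_def)

lemma fv_nth: "i < length hs \<Longrightarrow> fv (hs ! i) \<subseteq> fv_list hs"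
  unfolding fv_list_def using nth_mem by blast

lemma fv_set_set[simp]: "fv_set (set hs) = fv_list hs"
  by (simp add: fv_set_def fv_list_def)

lemma fv_set_ctx[simp]: "fv_set (set hs \<union> IKP) = fv_list hs"
  by simp

lemma ctx_snoc: "set (hs @ [a]) \<union> IKP = insert a (set hs \<union> IKP)"
  by auto

lemma ctx_fresh: "x \<notin> fv_list hs \<Longrightarrow> \<forall>\<gamma>\<in>set hs \<union> IKP. x \<notin> fv \<gamma>"
  using fv_set_ctx[of hs] unfolding fv_set_def by blast

lemma proves_hyp: "p \<in> set hs \<Longrightarrow> proves hs p"
  unfolding proves_def by (rule deriv.Assm) simp

lemma proves_nth: "i < length hs \<Longrightarrow> proves hs (hs ! i)"
  by (rule proves_hyp) simp

lemma proves_ImpI: "proves (hs @ [a]) b \<Longrightarrow> proves hs (Imp a b)"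
  unfolding proves_def ctx_snoc by (rule deriv.ImpI)

lemma proves_ImpE: "proves hs (Imp a b) \<Longrightarrow> proves hs a \<Longrightarrow> proves hs b"
  unfolding proves_def by (rule deriv.ImpE)

lemma proves_cut: "proves hs a \<Longrightarrow> proves (hs @ [a]) g \<Longrightarrow> proves hs g"
  by (metis proves_ImpE proves_ImpI)

lemma proves_cut2: "proves hs a \<Longrightarrow> proves hs b \<Longrightarrow> proves (hs @ [a, b]) g \<Longrightarrow> proves hs g"
  by (metis append_Cons append_Nil append_assoc proves_ImpE proves_ImpI)

lemma proves_AllI: "x \<notin> fv_list hs \<Longrightarrow> proves hs p \<Longrightarrow> proves hs (All x p)"
  unfolding proves_def by (rule deriv.AllI) (auto dest: ctx_fresh)

lemma proves_AllE: "proves hs (All x p) \<Longrightarrow> free_for y x p \<Longrightarrow> proves hs (subst p x y)"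
  unfolding proves_def by (rule deriv.AllE)

lemma proves_ConjI: "proves hs a \<Longrightarrow> proves hs b \<Longrightarrow> proves hs (Conj a b)"
  unfolding proves_def by (rule deriv.ConjI)

lemma proves_ConjE1: "proves hs (Conj a b) \<Longrightarrow> proves hs a"
  unfolding proves_def by (rule deriv.ConjE1)

lemma proves_ConjE2: "proves hs (Conj a b) \<Longrightarrow> proves hs b"
  unfolding proves_def by (rule deriv.ConjE2)

lemma proves_DisjI1: "proves hs a \<Longrightarrow> proves hs (Disj a b)"
  unfolding proves_def by (rule deriv.DisjI1)

lemma proves_DisjI2: "proves hs b \<Longrightarrow> proves hs (Disj a b)"
  unfolding proves_def by (rule deriv.DisjI2)

lemma proves_DisjE: "proves hs (Disj a b) \<Longrightarrow> proves (hs @ [a]) g \<Longrightarrow> proves (hs @ [b]) g \<Longrightarrow> proves hs g"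
  unfolding proves_def ctx_snoc by (rule deriv.DisjE)

lemma proves_ExI: "free_for y x p \<Longrightarrow> proves hs (subst p x y) \<Longrightarrow> proves hs (Ex x p)"
  unfolding proves_def by (rule deriv.ExI)

lemma proves_BotE: "proves hs Bot \<Longrightarrow> proves hs g"
  unfolding proves_def by (rule deriv.BotE)

lemma proves_Refl: "proves hs (Eq x x)"
  unfolding proves_def by (rule deriv.Refl)

lemma proves_Leibniz:
  "proves hs (Eq a b) \<Longrightarrow> proves hs (subst p z a) \<Longrightarrow> free_for a z p \<Longrightarrow> free_for b z p \<Longrightarrow> proves hs (subst p z b)"
  unfolding proves_def by (rule deriv.Leibniz)

lemma proves_Eq_sym: "proves hs (Eq a b) \<Longrightarrow> proves hs (Eq b a)"
proof -
  assume e: "proves hs (Eq a b)"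
  define z where "z = Suc (max a b)"
  have z: "z \<noteq> a" "z \<noteq> b" by (auto simp: z_def)
  have "proves hs (subst (Eq z a) z b)" by (rule proves_Leibniz[OF e]) (use z in \<open>auto intro: proves_Refl\<close>)
  then show "proves hs (Eq b a)" using z by simp
qed

lemma proves_IffI: "proves (hs @ [a]) b \<Longrightarrow> proves (hs @ [b]) a \<Longrightarrow> proves hs (Iff a b)"
  unfolding Iff_def by (intro proves_ConjI proves_ImpI)

lemma subst_subst_fresh: "w \<notin> fv p \<Longrightarrow> w \<notin> bnd p \<Longrightarrow> subst (subst p x w) w x = p"
  by (induction p) (auto simp: subst_nofv)

lemma free_for_subst_fresh: "w \<notin> fv p \<Longrightarrow> w \<notin> bnd p \<Longrightarrow> free_for x w (subst p x w)"
  by (induction p) (auto simp: subst_nofv)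

text \<open>Rule \<open>ExE\<close> of the calculus names the witness by the bound variable itself; here it may be
  any name \<open>w\<close> that is fresh for the context, the conclusion and the body.\<close>

lemma proves_ExE:
  assumes ex: "proves hs (Ex x p)" and "x \<notin> fv_list hs" "w \<notin> fv_list hs" "w \<notin> fv g"
    and "w \<notin> fv p - {x}" "w \<notin> bnd p"
    and prem: "proves (hs @ [subst p x w]) g"
  shows "proves hs g"
proof -
  define \<Gamma> where "\<Gamma> = set hs \<union> IKP"
  have c: "deriv \<Gamma> (Ex x p)" using ex by (simp add: proves_def \<Gamma>_def)
  have fx: "\<forall>\<gamma>\<in>\<Gamma>. x \<notin> fv \<gamma>" using ctx_fresh assms(2) by (simp add: \<Gamma>_def)
  have fw: "\<forall>\<gamma>\<in>\<Gamma>. w \<notin> fv \<gamma>" using ctx_fresh assms(3) by (simp add: \<Gamma>_def)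
  show ?thesis
  proof (cases "w = x")
    case True
    then have "deriv (insert p \<Gamma>) g" using prem by (simp add: proves_def \<Gamma>_def ctx_snoc)
    then show ?thesis unfolding proves_def using deriv.ExE[OF c _ fx] assms(4) True by (simp add: \<Gamma>_def)
  next
    case False
    have wp: "w \<notin> fv p" and wb: "w \<notin> bnd p" using assms(5,6) False by auto
    have "deriv (insert p \<Gamma>) (Ex w (subst p x w))"
    proof (rule deriv.ExI[where y = x])
      show "deriv (insert p \<Gamma>) (subst (subst p x w) w x)"
        using subst_subst_fresh[OF wp wb] by (auto intro: deriv.Assm)
      show "free_for x w (subst p x w)" by (rule free_for_subst_fresh[OF wp wb])
    qed
    moreover have "x \<notin> fv (Ex w (subst p x w))" using fv_subst_sub[of p x w] False by auto
    ultimately have e: "deriv \<Gamma> (Ex w (subst p x w))" by (rule deriv.ExE[OF c _ fx])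
    have "deriv (insert (subst p x w) \<Gamma>) g" using prem by (simp add: proves_def \<Gamma>_def ctx_snoc)
    then show ?thesis unfolding proves_def using deriv.ExE[OF e _ fw] assms(4) by (simp add: \<Gamma>_def)
  qed
qed

lemma proves_alpha:
  "proves hs p \<Longrightarrow> unshadowed p \<Longrightarrow> inj_on f (bnd p) \<Longrightarrow> (bnd p \<union> f ` bnd p) \<inter> (fv_list hs \<union> fv p) = {}
    \<Longrightarrow> proves hs (rename f id p)"
  using deriv_alpha[of "set hs \<union> IKP" p f] finite_fv_list unfolding proves_def by simp

lemma deriv_weaken_closed: "deriv \<Gamma> p \<Longrightarrow> fv_set \<Delta> = {} \<Longrightarrow> deriv (\<Gamma> \<union> \<Delta>) p"
proof (induction rule: deriv.induct)
  case (Assm \<phi> \<Gamma>) then show ?case by (auto intro: deriv.Assm)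
next
  case (BotE \<Gamma> \<phi>) then show ?case by (auto intro: deriv.BotE)
next
  case (ConjI \<Gamma> \<phi> \<psi>) then show ?case by (auto intro: deriv.ConjI)
next
  case (ConjE1 \<Gamma> \<phi> \<psi>) then show ?case by (auto intro: deriv.ConjE1)
next
  case (ConjE2 \<Gamma> \<phi> \<psi>) then show ?case by (auto intro: deriv.ConjE2)
next
  case (DisjI1 \<Gamma> \<phi> \<psi>) then show ?case by (auto intro: deriv.DisjI1)
next
  case (DisjI2 \<Gamma> \<psi> \<phi>) then show ?case by (auto intro: deriv.DisjI2)
next
  case (DisjE \<Gamma> \<phi> \<psi> \<chi>)
  then show ?case using deriv.DisjE[of "\<Gamma> \<union> \<Delta>" \<phi> \<psi> \<chi>] by simp
next
  case (ImpI \<phi> \<Gamma> \<psi>)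
  then show ?case using deriv.ImpI[of \<phi> "\<Gamma> \<union> \<Delta>" \<psi>] by simp
next
  case (ImpE \<Gamma> \<phi> \<psi>) then show ?case by (auto intro: deriv.ImpE)
next
  case (AllI \<Gamma> \<phi> x)
  have "\<forall>\<gamma>\<in>\<Gamma> \<union> \<Delta>. x \<notin> fv \<gamma>" using AllI.hyps(2) AllI.prems by (auto simp: fv_set_def)
  then show ?case using deriv.AllI AllI.IH AllI.prems by blast
next
  case (AllE \<Gamma> x \<phi> y) then show ?case by (auto intro: deriv.AllE)
next
  case (ExI \<Gamma> \<phi> x y) then show ?case by (auto intro: deriv.ExI)
next
  case (ExE \<Gamma> x \<phi> \<psi>)
  have "\<forall>\<gamma>\<in>\<Gamma> \<union> \<Delta>. x \<notin> fv \<gamma>" using ExE.hyps(3) ExE.prems by (auto simp: fv_set_def)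
  moreover have "deriv (insert \<phi> (\<Gamma> \<union> \<Delta>)) \<psi>" using ExE.IH(2) ExE.prems by simp
  ultimately show ?case using deriv.ExE ExE.IH(1) ExE.prems ExE.hyps(4) by blast
next
  case (Refl \<Gamma> x) show ?case by (rule deriv.Refl)
next
  case (Leibniz \<Gamma> x y \<phi> z) then show ?case by (auto intro: deriv.Leibniz)
qed

lemma proves_weaken: "proves hs p \<Longrightarrow> set hs \<subseteq> set ks \<Longrightarrow> fv_list ks = {} \<Longrightarrow> proves ks p"
proof -
  assume a: "proves hs p" "set hs \<subseteq> set ks" "fv_list ks = {}"
  have "deriv ((set hs \<union> IKP) \<union> set ks) p"
    using deriv_weaken_closed[OF a(1)[unfolded proves_def], of "set ks"] a(3) by (simp add: fv_set_def fv_list_def)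
  moreover have "(set hs \<union> IKP) \<union> set ks = set ks \<union> IKP" using a(2) by auto
  ultimately show ?thesis by (simp add: proves_def)
qed

lemma proves_IKP_closure: "close p \<in> IKP \<Longrightarrow> proves hs p"
  unfolding proves_def by (rule deriv_unclose) (rule deriv.Assm, simp)

lemma proves_Sep:
  assumes "delta0 p" "distinct [a, b, x]" "b \<notin> fv p"
  shows "proves hs (All a (Ex b (All x (Iff (Mem x b) (Conj (Mem x a) p)))))"
proof (rule proves_IKP_closure)
  have "close (All a (Ex b (All x (Iff (Mem x b) (Conj (Mem x a) p))))) \<in> Sep_ax"
    unfolding Sep_ax_def mem_Collect_eq
    by (rule exI[of _ a], rule exI[of _ b], rule exI[of _ x], rule exI[of _ p]) (use assms in simp)
  then show "close (All a (Ex b (All x (Iff (Mem x b) (Conj (Mem x a) p))))) \<in> IKP"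
    unfolding IKP_def by blast
qed

lemma proves_Coll:
  assumes "delta0 p" "distinct [a, b, x, y]" "b \<notin> fv p"
  shows "proves hs (Imp (BAll x a (Ex y p)) (Ex b (BAll x a (BEx y b p))))"
proof (rule proves_IKP_closure)
  have "close (Imp (BAll x a (Ex y p)) (Ex b (BAll x a (BEx y b p)))) \<in> Coll_ax"
    unfolding Coll_ax_def mem_Collect_eq
    by (rule exI[of _ a], rule exI[of _ b], rule exI[of _ x], rule exI[of _ y], rule exI[of _ p]) (use assms in simp)
  then show "close (Imp (BAll x a (Ex y p)) (Ex b (BAll x a (BEx y b p)))) \<in> IKP"
    unfolding IKP_def by blast
qed

lemma proves_SetInd:
  assumes "a \<noteq> x" "x \<notin> fv p" "free_for x a p"
  shows "proves hs (Imp (All a (Imp (BAll x a (subst p a x)) p)) (All a p))"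
proof (rule proves_IKP_closure)
  have "close (Imp (All a (Imp (BAll x a (subst p a x)) p)) (All a p)) \<in> SetInd_ax"
    unfolding SetInd_ax_def mem_Collect_eq
    by (rule exI[of _ a], rule exI[of _ x], rule exI[of _ p]) (use assms in simp)
  then show "close (Imp (All a (Imp (BAll x a (subst p a x)) p)) (All a p)) \<in> IKP"
    unfolding IKP_def by blast
qed

text \<open>Copies of the axioms of extensionality, pairing and union whose bound variables live above 9000,
  so that they can be instantiated with the small variable names used in the derivations below
  without capture. \<open>PlUb\<close> and \<open>Powerset\<close> are treated in the same way below.\<close>

definition Ext_ren :: fm where
  "Ext_ren = All 9001 (All 9002 (Imp (All 9003 (Iff (Mem 9003 9001) (Mem 9003 9002))) (Eq 9001 9002)))"

definition Pair_ren :: fm where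
  "Pair_ren = All 9011 (All 9012 (Ex 9013 (Conj (Mem 9011 9013) (Mem 9012 9013))))"

definition Union_ren :: fm where
  "Union_ren = All 9021 (Ex 9022 (BAll 9023 9021 (BAll 9024 9023 (Mem 9024 9022))))"

lemma fv_Ext_ren[simp]: "fv Ext_ren = {}"
  and fv_Pair_ren[simp]: "fv Pair_ren = {}"
  and fv_Union_ren[simp]: "fv Union_ren = {}"
  by (auto simp: Ext_ren_def Pair_ren_def Union_ren_def Iff_def BAll_def)

lemma proves_axiom_rename:
  assumes "p \<in> IKP" "fv p = {}" "unshadowed p" "inj_on f (bnd p)"
  shows "proves [] (rename f id p)"
proof (rule proves_alpha)
  show "proves [] p" using assms(1) unfolding proves_def by (auto intro: deriv.Assm)
qed (use assms in auto)

lemma proves_Ext_ren: "proves [] Ext_ren"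
  using proves_axiom_rename[of Ext_ax "\<lambda>v. v + 9001"]
  by (simp add: IKP_def Ext_ax_def Ext_ren_def Iff_def)

lemma proves_Pair_ren: "proves [] Pair_ren"
  using proves_axiom_rename[of Pair_ax "\<lambda>v. v + 9011"]
  by (simp add: IKP_def Pair_ax_def Pair_ren_def)

lemma proves_Union_ren: "proves [] Union_ren"
  using proves_axiom_rename[of Union_ax "\<lambda>v. v + 9021"]
  by (simp add: IKP_def Union_ax_def Union_ren_def BAll_def)

lemma proves_pair_obtain:
  assumes "Pair_ren \<in> set hs" "a \<notin> {9012, 9013}" "b \<noteq> 9013" "9013 \<notin> fv_list hs" "w \<notin> fv_list hs" "w \<notin> fv g"
    "w \<notin> {a, b}"
    "proves (hs @ [Conj (Mem a w) (Mem b w)]) g"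
  shows "proves hs g"
proof -
  have "proves hs (All 9012 (Ex 9013 (Conj (Mem a 9013) (Mem 9012 9013))))"
    using proves_AllE[OF proves_hyp[OF assms(1), unfolded Pair_ren_def], of a] assms(2) by simp
  then have "proves hs (subst (Ex 9013 (Conj (Mem a 9013) (Mem 9012 9013))) 9012 b)"
    by (rule proves_AllE) (use assms(3) in simp)
  then have "proves hs (Ex 9013 (Conj (Mem a 9013) (Mem b 9013)))" using assms(2,3) by simp
  then show ?thesis by (rule proves_ExE[where w = w]) (use assms in auto)
qed

lemma proves_union_obtain:
  assumes "Union_ren \<in> set hs" "a \<notin> {9022, 9023, 9024}" "9022 \<notin> fv_list hs" "w \<notin> fv_list hs" "w \<notin> fv g"
    "w \<notin> {a, 9023, 9024}"
    "proves (hs @ [BAll 9023 a (BAll 9024 9023 (Mem 9024 w))]) g"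
  shows "proves hs g"
proof -
  have "proves hs (Ex 9022 (BAll 9023 a (BAll 9024 9023 (Mem 9024 9022))))"
    using proves_AllE[OF proves_hyp[OF assms(1), unfolded Union_ren_def], of a] assms(2) by (simp add: BAll_def)
  then show ?thesis by (rule proves_ExE[where w = w]) (use assms in \<open>auto simp: BAll_def\<close>)
qed

lemma proves_ext:
  assumes "Ext_ren \<in> set hs" "a \<notin> {9002, 9003}" "b \<noteq> 9003" "9003 \<notin> fv_list hs" "z \<notin> fv_list hs" "z \<notin> {a, b}"
    "proves (hs @ [Mem z a]) (Mem z b)" "proves (hs @ [Mem z b]) (Mem z a)"
  shows "proves hs (Eq a b)"
proof -
  have "proves hs (All 9002 (Imp (All 9003 (Iff (Mem 9003 a) (Mem 9003 9002))) (Eq a 9002)))"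
    using proves_AllE[OF proves_hyp[OF assms(1), unfolded Ext_ren_def], of a] assms by (simp add: Iff_def)
  then have "proves hs (subst (Imp (All 9003 (Iff (Mem 9003 a) (Mem 9003 9002))) (Eq a 9002)) 9002 b)"
    by (rule proves_AllE) (use assms in \<open>simp add: Iff_def\<close>)
  then have ext: "proves hs (Imp (All 9003 (Iff (Mem 9003 a) (Mem 9003 b))) (Eq a b))"
    using assms by (simp add: Iff_def)
  have "proves hs (All z (Iff (Mem z a) (Mem z b)))"
    using assms(5,7,8) by (intro proves_AllI proves_IffI)
  then have "proves hs (rename (\<lambda>v. if v = z then 9003 else v) id (All z (Iff (Mem z a) (Mem z b))))"
    by (rule proves_alpha) (use assms in \<open>auto simp: Iff_def\<close>)
  then have "proves hs (All 9003 (Iff (Mem 9003 a) (Mem 9003 b)))" using assms by (auto simp: Iff_def)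
  then show ?thesis by (rule proves_ImpE[OF ext])
qed

lemma proves_sep_obtain:
  assumes "delta0 p" "distinct [a, b, x]" "b \<notin> fv p" "b \<notin> bnd p" "b \<notin> fv_list hs" "b \<notin> fv g"
    "proves (hs @ [All x (Iff (Mem x b) (Conj (Mem x a) p))]) g"
  shows "proves hs g"
proof -
  have "proves hs (subst (Ex b (All x (Iff (Mem x b) (Conj (Mem x a) p)))) a a)"
    by (rule proves_AllE[OF proves_Sep[OF assms(1-3)]]) simp
  then have "proves hs (Ex b (All x (Iff (Mem x b) (Conj (Mem x a) p))))" by simp
  then show ?thesis by (rule proves_ExE[where w = b]) (use assms in \<open>auto simp: Iff_def\<close>)
qed

lemma proves_coll_obtain:
  assumes "delta0 p" "distinct [a, b, x, y]" "b \<notin> fv p" "b \<notin> bnd p" "b \<notin> fv_list hs" "b \<notin> fv g"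
    "proves hs (BAll x a (Ex y p))"
    "proves (hs @ [BAll x a (BEx y b p)]) g"
  shows "proves hs g"
proof -
  have "proves hs (Ex b (BAll x a (BEx y b p)))"
    by (rule proves_ImpE[OF proves_Coll[OF assms(1-3)] assms(7)])
  then show ?thesis by (rule proves_ExE[where w = b]) (use assms in \<open>auto simp: BAll_def BEx_def\<close>)
qed

lemma delta0_simps[simp]:
  "delta0 (Mem x y)" "delta0 (Eq x y)" "delta0 Bot"
  "delta0 (Conj p q) \<longleftrightarrow> delta0 p \<and> delta0 q"
  "delta0 (Disj p q) \<longleftrightarrow> delta0 p \<and> delta0 q"
  "delta0 (Imp p q) \<longleftrightarrow> delta0 p \<and> delta0 q"
  "delta0 (All x (Imp (Mem y a) p)) \<longleftrightarrow> y = x \<and> x \<noteq> a \<and> delta0 p"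
  "delta0 (Ex x (Conj (Mem y a) p)) \<longleftrightarrow> y = x \<and> x \<noteq> a \<and> delta0 p"
  by (auto intro: delta0.intros elim: delta0.cases)

text \<open>\<open>binder_map (binder_match p q)\<close> is the renaming of bound variables that turns \<open>p\<close> into its
  alpha-variant \<open>q\<close>; simp computes it, so a hypothesis can be used up to renaming of bound variables.\<close>

fun binder_match :: "fm \<Rightarrow> fm \<Rightarrow> (nat \<times> nat) list" where
  "binder_match (Conj p q) (Conj p' q') = binder_match p p' @ binder_match q q'"
| "binder_match (Disj p q) (Disj p' q') = binder_match p p' @ binder_match q q'"
| "binder_match (Imp p q) (Imp p' q') = binder_match p p' @ binder_match q q'"
| "binder_match (All x p) (All y q) = (x, y) # binder_match p q"
| "binder_match (Ex x p) (Ex y q) = (x, y) # binder_match p q"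
| "binder_match _ _ = []"

definition binder_map :: "(nat \<times> nat) list \<Rightarrow> nat \<Rightarrow> nat" where
  "binder_map xs v = (case map_of xs v of Some w \<Rightarrow> w | None \<Rightarrow> v)"

declare binder_map_def[simp]

section \<open>Sequent calculus with indexed hypotheses\<close>

text \<open>\<open>sequent S hs g\<close> is \<open>proves hs g\<close> under the proviso that \<open>S\<close> bounds the free variables of
  the hypotheses. The rules below maintain \<open>S\<close> explicitly, so that the eigenvariable conditions
  become membership tests in a concrete finite set, which simp decides. Left rules address
  hypotheses by their position in \<open>hs\<close> and append their conclusions at the end.\<close>

definition sequent :: "nat set \<Rightarrow> fm list \<Rightarrow> fm \<Rightarrow> bool" where
  "sequent S hs g \<longleftrightarrow> (fv_list hs \<subseteq> S \<longrightarrow> proves hs g)"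

lemma sequentI: "(fv_list hs \<subseteq> S \<Longrightarrow> proves hs g) \<Longrightarrow> sequent S hs g"
  by (simp add: sequent_def)

lemma sequentD: "sequent S hs g \<Longrightarrow> fv_list hs \<subseteq> S \<Longrightarrow> proves hs g"
  by (simp add: sequent_def)

lemma sequent_closed: "fv_list hs = {} \<Longrightarrow> sequent {} hs g \<Longrightarrow> proves hs g"
  by (simp add: sequent_def)

fun lhs :: "fm \<Rightarrow> fm" where
  "lhs (Conj p q) = p" | "lhs (Disj p q) = p" | "lhs (Imp p q) = p" | "lhs _ = Bot"
fun rhs :: "fm \<Rightarrow> fm" where
  "rhs (Conj p q) = q" | "rhs (Disj p q) = q" | "rhs (Imp p q) = q" | "rhs _ = Bot"
fun qv :: "fm \<Rightarrow> nat" where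
  "qv (All x p) = x" | "qv (Ex x p) = x" | "qv _ = 0"
fun qb :: "fm \<Rightarrow> fm" where
  "qb (All x p) = p" | "qb (Ex x p) = p" | "qb _ = Bot"
fun el :: "fm \<Rightarrow> nat" where "el (Eq a b) = a" | "el _ = 0"
fun er :: "fm \<Rightarrow> nat" where "er (Eq a b) = b" | "er _ = 0"

fun isEq :: "fm \<Rightarrow> bool" where "isEq (Eq a b) = True" | "isEq _ = False"
fun isC :: "fm \<Rightarrow> bool" where "isC (Conj p q) = True" | "isC _ = False"
fun isD :: "fm \<Rightarrow> bool" where "isD (Disj p q) = True" | "isD _ = False"
fun isI :: "fm \<Rightarrow> bool" where "isI (Imp p q) = True" | "isI _ = False"
fun isA :: "fm \<Rightarrow> bool" where "isA (All x p) = True" | "isA _ = False"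
fun isE :: "fm \<Rightarrow> bool" where "isE (Ex x p) = True" | "isE _ = False"

lemma isEq_eq: "isEq p \<Longrightarrow> p = Eq (el p) (er p)" by (cases p) auto
lemma isC_eq: "isC p \<Longrightarrow> p = Conj (lhs p) (rhs p)" by (cases p) auto
lemma isD_eq: "isD p \<Longrightarrow> p = Disj (lhs p) (rhs p)" by (cases p) auto
lemma isI_eq: "isI p \<Longrightarrow> p = Imp (lhs p) (rhs p)" by (cases p) auto
lemma isA_eq: "isA p \<Longrightarrow> p = All (qv p) (qb p)" by (cases p) auto
lemma isE_eq: "isE p \<Longrightarrow> p = Ex (qv p) (qb p)" by (cases p) auto

lemma fv_lhs: "fv (lhs p) \<subseteq> fv p" by (cases p) auto
lemma fv_rhs: "fv (rhs p) \<subseteq> fv p" by (cases p) auto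

lemma fv_rename_id: "fv (rename f id p) \<subseteq> fv p"
  using fv_rename_subset[of f id p] by simp

lemma hyp: "p \<in> set hs \<Longrightarrow> sequent S hs p"
  by (simp add: sequent_def proves_hyp)

lemma cut: "sequent S hs a \<Longrightarrow> sequent (fv a \<union> S) (hs @ [a]) g \<Longrightarrow> sequent S hs g"
  unfolding sequent_def by (auto intro: proves_cut)

lemma imp_R: "sequent (fv a \<union> S) (hs @ [a]) b \<Longrightarrow> sequent S hs (Imp a b)"
  unfolding sequent_def by (auto intro: proves_ImpI)

lemma all_R: "x \<notin> S \<Longrightarrow> sequent S hs p \<Longrightarrow> sequent S hs (All x p)"
  unfolding sequent_def by (auto intro: proves_AllI)

lemma conj_R: "sequent S hs a \<Longrightarrow> sequent S hs b \<Longrightarrow> sequent S hs (Conj a b)"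
  unfolding sequent_def by (auto intro: proves_ConjI)

lemma disj_R1: "sequent S hs a \<Longrightarrow> sequent S hs (Disj a b)"
  unfolding sequent_def by (auto intro: proves_DisjI1)

lemma disj_R2: "sequent S hs b \<Longrightarrow> sequent S hs (Disj a b)"
  unfolding sequent_def by (auto intro: proves_DisjI2)

lemma ex_R: "free_for y x p \<Longrightarrow> sequent S hs (subst p x y) \<Longrightarrow> sequent S hs (Ex x p)"
  unfolding sequent_def by (auto intro: proves_ExI)

lemma refl_R: "sequent S hs (Eq x x)"
  unfolding sequent_def by (auto intro: proves_Refl)

lemma bot_L: "Bot \<in> set hs \<Longrightarrow> sequent S hs g"
  unfolding sequent_def by (auto intro: proves_BotE proves_hyp)

lemma conj_L:
  assumes "i < length hs" "isC (hs ! i)" "sequent S (hs @ [lhs (hs ! i), rhs (hs ! i)]) g"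
  shows "sequent S hs g"
proof (rule sequentI)
  assume S: "fv_list hs \<subseteq> S"
  have c: "proves hs (Conj (lhs (hs ! i)) (rhs (hs ! i)))" using proves_nth[OF assms(1)] isC_eq[OF assms(2)] by simp
  have "fv_list (hs @ [lhs (hs ! i), rhs (hs ! i)]) \<subseteq> S"
    using S fv_nth[OF assms(1)] fv_lhs[of "hs ! i"] fv_rhs[of "hs ! i"] by auto
  then show "proves hs g"
    by (rule proves_cut2[OF proves_ConjE1[OF c] proves_ConjE2[OF c] sequentD[OF assms(3)]])
qed

lemma disj_L:
  assumes "i < length hs" "isD (hs ! i)" "sequent S (hs @ [lhs (hs ! i)]) g" "sequent S (hs @ [rhs (hs ! i)]) g"
  shows "sequent S hs g"
proof (rule sequentI)
  assume S: "fv_list hs \<subseteq> S"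
  have d: "proves hs (Disj (lhs (hs ! i)) (rhs (hs ! i)))" using proves_nth[OF assms(1)] isD_eq[OF assms(2)] by simp
  have "fv_list (hs @ [lhs (hs ! i)]) \<subseteq> S" "fv_list (hs @ [rhs (hs ! i)]) \<subseteq> S"
    using S fv_nth[OF assms(1)] fv_lhs[of "hs ! i"] fv_rhs[of "hs ! i"] by auto
  then show "proves hs g" by (intro proves_DisjE[OF d] sequentD[OF assms(3)] sequentD[OF assms(4)])
qed

lemma imp_L:
  assumes "i < length hs" "isI (hs ! i)" "sequent S hs (lhs (hs ! i))" "sequent S (hs @ [rhs (hs ! i)]) g"
  shows "sequent S hs g"
proof (rule sequentI)
  assume S: "fv_list hs \<subseteq> S"
  have "proves hs (Imp (lhs (hs ! i)) (rhs (hs ! i)))" using proves_nth[OF assms(1)] isI_eq[OF assms(2)] by simp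
  then have "proves hs (rhs (hs ! i))" using sequentD[OF assms(3) S] by (rule proves_ImpE)
  moreover have "fv_list (hs @ [rhs (hs ! i)]) \<subseteq> S" using S fv_nth[OF assms(1)] fv_rhs[of "hs ! i"] by auto
  then have "proves (hs @ [rhs (hs ! i)]) g" by (rule sequentD[OF assms(4)])
  ultimately show "proves hs g" by (rule proves_cut)
qed

lemma all_L:
  assumes "i < length hs" "isA (hs ! i)" "free_for y (qv (hs ! i)) (qb (hs ! i))"
    "sequent (insert y S) (hs @ [subst (qb (hs ! i)) (qv (hs ! i)) y]) g"
  shows "sequent S hs g"
proof (rule sequentI)
  assume S: "fv_list hs \<subseteq> S"
  have "proves hs (All (qv (hs ! i)) (qb (hs ! i)))" using proves_nth[OF assms(1)] isA_eq[OF assms(2)] by simp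
  then have "proves hs (subst (qb (hs ! i)) (qv (hs ! i)) y)" using assms(3) by (rule proves_AllE)
  moreover have "fv (All (qv (hs ! i)) (qb (hs ! i))) \<subseteq> S" using S fv_nth[OF assms(1)] isA_eq[OF assms(2)] by simp
  then have "fv_list (hs @ [subst (qb (hs ! i)) (qv (hs ! i)) y]) \<subseteq> insert y S"
    using S fv_subst_sub[of "qb (hs ! i)" "qv (hs ! i)" y] by auto
  then have "proves (hs @ [subst (qb (hs ! i)) (qv (hs ! i)) y]) g" by (rule sequentD[OF assms(4)])
  ultimately show "proves hs g" by (rule proves_cut)
qed

lemma ex_L:
  assumes "i < length hs" "isE (hs ! i)" "qv (hs ! i) \<notin> S" "w \<notin> S" "w \<notin> fv g"
    "w \<notin> fv (qb (hs ! i)) - {qv (hs ! i)}" "w \<notin> bnd (qb (hs ! i))"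
    "sequent (insert w S) (hs @ [subst (qb (hs ! i)) (qv (hs ! i)) w]) g"
  shows "sequent S hs g"
proof (rule sequentI)
  assume S: "fv_list hs \<subseteq> S"
  have ex: "proves hs (Ex (qv (hs ! i)) (qb (hs ! i)))" using proves_nth[OF assms(1)] isE_eq[OF assms(2)] by simp
  have "fv (Ex (qv (hs ! i)) (qb (hs ! i))) \<subseteq> S" using S fv_nth[OF assms(1)] isE_eq[OF assms(2)] by simp
  then have "fv_list (hs @ [subst (qb (hs ! i)) (qv (hs ! i)) w]) \<subseteq> insert w S"
    using S fv_subst_sub[of "qb (hs ! i)" "qv (hs ! i)" w] by auto
  then have "proves (hs @ [subst (qb (hs ! i)) (qv (hs ! i)) w]) g" by (rule sequentD[OF assms(8)])
  then show "proves hs g" by (rule proves_ExE[OF ex, rotated -1]) (use assms S in auto)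
qed

lemma eq_L:
  assumes "i < length hs" "j < length hs" "isEq (hs ! j)" "free_for (er (hs ! j)) (el (hs ! j)) (hs ! i)"
    "sequent S (hs @ [subst (hs ! i) (el (hs ! j)) (er (hs ! j))]) g"
  shows "sequent S hs g"
proof (rule sequentI)
  assume S: "fv_list hs \<subseteq> S"
  have e: "proves hs (Eq (el (hs ! j)) (er (hs ! j)))" using proves_nth[OF assms(2)] isEq_eq[OF assms(3)] by simp
  have "proves hs (subst (hs ! i) (el (hs ! j)) (el (hs ! j)))" using proves_nth[OF assms(1)] by simp
  then have "proves hs (subst (hs ! i) (el (hs ! j)) (er (hs ! j)))"
    by (rule proves_Leibniz[OF e]) (simp_all add: assms(4))
  moreover have "fv (Eq (el (hs ! j)) (er (hs ! j))) \<subseteq> S" using S fv_nth[OF assms(2)] isEq_eq[OF assms(3)] by simp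
  then have "fv_list (hs @ [subst (hs ! i) (el (hs ! j)) (er (hs ! j))]) \<subseteq> S"
    using S fv_nth[OF assms(1)] fv_subst_sub[of "hs ! i" "el (hs ! j)" "er (hs ! j)"] by auto
  then have "proves (hs @ [subst (hs ! i) (el (hs ! j)) (er (hs ! j))]) g" by (rule sequentD[OF assms(5)])
  ultimately show "proves hs g" by (rule proves_cut)
qed

lemma eq_sym_L:
  assumes "i < length hs" "isEq (hs ! i)" "sequent S (hs @ [Eq (er (hs ! i)) (el (hs ! i))]) g"
  shows "sequent S hs g"
proof (rule sequentI)
  assume S: "fv_list hs \<subseteq> S"
  have "proves hs (Eq (el (hs ! i)) (er (hs ! i)))" using proves_nth[OF assms(1)] isEq_eq[OF assms(2)] by simp
  then have "proves hs (Eq (er (hs ! i)) (el (hs ! i)))" by (rule proves_Eq_sym)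
  moreover have "fv (Eq (el (hs ! i)) (er (hs ! i))) \<subseteq> S" using S fv_nth[OF assms(1)] isEq_eq[OF assms(2)] by simp
  then have "fv_list (hs @ [Eq (er (hs ! i)) (el (hs ! i))]) \<subseteq> S" using S by auto
  then have "proves (hs @ [Eq (er (hs ! i)) (el (hs ! i))]) g" by (rule sequentD[OF assms(3)])
  ultimately show "proves hs g" by (rule proves_cut)
qed

lemma hyp_alpha:
  assumes "j < length hs" "g = rename (binder_map (binder_match (hs ! j) g)) id (hs ! j)" "unshadowed (hs ! j)"
    "inj_on (binder_map (binder_match (hs ! j) g)) (bnd (hs ! j))"
    "(bnd (hs ! j) \<union> binder_map (binder_match (hs ! j) g) ` bnd (hs ! j)) \<inter> (S \<union> fv (hs ! j)) = {}"
  shows "sequent S hs g"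
proof (rule sequentI)
  assume "fv_list hs \<subseteq> S"
  then have "(bnd (hs ! j) \<union> binder_map (binder_match (hs ! j) g) ` bnd (hs ! j)) \<inter> (fv_list hs \<union> fv (hs ! j)) = {}"
    using assms(5) by blast
  then show "proves hs g" using proves_alpha[OF proves_nth[OF assms(1)] assms(3,4)] assms(2) by simp
qed

lemma alpha_L:
  assumes "j < length hs" "q = rename (binder_map (binder_match (hs ! j) q)) id (hs ! j)" "unshadowed (hs ! j)"
    "inj_on (binder_map (binder_match (hs ! j) q)) (bnd (hs ! j))"
    "(bnd (hs ! j) \<union> binder_map (binder_match (hs ! j) q) ` bnd (hs ! j)) \<inter> (S \<union> fv (hs ! j)) = {}"
    "sequent S (hs @ [q]) g"
  shows "sequent S hs g"
proof -
  have "fv q \<subseteq> fv (hs ! j)" using assms(2) fv_rename_id by metis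
  then have "fv_list (hs @ [q]) \<subseteq> S" if "fv_list hs \<subseteq> S" using that fv_nth[OF assms(1)] by auto
  then show ?thesis using cut[OF hyp_alpha[OF assms(1-5)], of g] assms(6) unfolding sequent_def by auto
qed

lemma imp_L_alpha:
  assumes "i < length hs" "j < length hs" "isI (hs ! i)"
    "lhs (hs ! i) = rename (binder_map (binder_match (hs ! j) (lhs (hs ! i)))) id (hs ! j)" "unshadowed (hs ! j)"
    "inj_on (binder_map (binder_match (hs ! j) (lhs (hs ! i)))) (bnd (hs ! j))"
    "(bnd (hs ! j) \<union> binder_map (binder_match (hs ! j) (lhs (hs ! i))) ` bnd (hs ! j)) \<inter> (S \<union> fv (hs ! j)) = {}"
    "sequent S (hs @ [rhs (hs ! i)]) g"
  shows "sequent S hs g"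
  by (rule imp_L[OF assms(1,3) hyp_alpha[OF assms(2,4-7)] assms(8)])

lemma ext_R:
  assumes "Ext_ren \<in> set hs" "a \<notin> {9002, 9003}" "b \<noteq> 9003" "9003 \<notin> S" "z \<notin> S" "z \<notin> {a, b}"
    "sequent ({z, a, b} \<union> S) (hs @ [Mem z a]) (Mem z b)" "sequent ({z, a, b} \<union> S) (hs @ [Mem z b]) (Mem z a)"
  shows "sequent S hs (Eq a b)"
proof (rule sequentI)
  assume S: "fv_list hs \<subseteq> S"
  show "proves hs (Eq a b)"
  proof (rule proves_ext[where z = z])
    show "proves (hs @ [Mem z a]) (Mem z b)" "proves (hs @ [Mem z b]) (Mem z a)"
      using assms(7,8) S by (auto intro!: sequentD)
  qed (use assms S in auto)
qed

lemma sep_obtain: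
  assumes "delta0 p" "distinct [a, b, x]" "b \<notin> fv p" "b \<notin> bnd p" "b \<notin> S" "b \<notin> fv g"
    "sequent (fv (All x (Iff (Mem x b) (Conj (Mem x a) p))) \<union> S) (hs @ [All x (Iff (Mem x b) (Conj (Mem x a) p))]) g"
  shows "sequent S hs g"
proof (rule sequentI)
  assume S: "fv_list hs \<subseteq> S"
  show "proves hs g"
  proof (rule proves_sep_obtain[where a = a and b = b and x = x and p = p])
    show "proves (hs @ [All x (Iff (Mem x b) (Conj (Mem x a) p))]) g"
      by (rule sequentD[OF assms(7)]) (use S in auto)
  qed (use assms S in auto)
qed

lemma coll_obtain:
  assumes "delta0 p" "distinct [a, b, x, y]" "b \<notin> fv p" "b \<notin> bnd p" "b \<notin> S" "b \<notin> fv g"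
    "sequent S hs (BAll x a (Ex y p))"
    "sequent (fv (BAll x a (BEx y b p)) \<union> S) (hs @ [BAll x a (BEx y b p)]) g"
  shows "sequent S hs g"
proof (rule sequentI)
  assume S: "fv_list hs \<subseteq> S"
  show "proves hs g"
  proof (rule proves_coll_obtain[where a = a and b = b and x = x and y = y and p = p])
    show "proves hs (BAll x a (Ex y p))" by (rule sequentD[OF assms(7) S])
    show "proves (hs @ [BAll x a (BEx y b p)]) g" by (rule sequentD[OF assms(8)]) (use S in auto)
  qed (use assms S in auto)
qed

lemma pair_obtain:
  assumes "Pair_ren \<in> set hs" "a \<notin> {9012, 9013}" "b \<noteq> 9013" "9013 \<notin> S" "w \<notin> S" "w \<notin> fv g"
    "w \<notin> {a, b}"
    "sequent ({a, b, w} \<union> S) (hs @ [Conj (Mem a w) (Mem b w)]) g"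
  shows "sequent S hs g"
proof (rule sequentI)
  assume S: "fv_list hs \<subseteq> S"
  show "proves hs g"
  proof (rule proves_pair_obtain[where a = a and b = b and w = w])
    show "proves (hs @ [Conj (Mem a w) (Mem b w)]) g" by (rule sequentD[OF assms(8)]) (use S in auto)
  qed (use assms S in auto)
qed

lemma union_obtain:
  assumes "Union_ren \<in> set hs" "a \<notin> {9022, 9023, 9024}" "9022 \<notin> S" "w \<notin> S" "w \<notin> fv g"
    "w \<notin> {a, 9023, 9024}"
    "sequent ({a, w} \<union> S) (hs @ [BAll 9023 a (BAll 9024 9023 (Mem 9024 w))]) g"
  shows "sequent S hs g"
proof (rule sequentI)
  assume S: "fv_list hs \<subseteq> S"
  show "proves hs g"
  proof (rule proves_union_obtain[where a = a and w = w])
    show "proves (hs @ [BAll 9023 a (BAll 9024 9023 (Mem 9024 w))]) g"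
      by (rule sequentD[OF assms(7)]) (use S in \<open>auto simp: BAll_def\<close>)
  qed (use assms S in auto)
qed

lemma setind_L:
  assumes "a \<noteq> x" "x \<notin> fv p" "free_for x a p"
    "sequent ((fv p - {a}) \<union> S) (hs @ [Imp (All a (Imp (BAll x a (subst p a x)) p)) (All a p)]) g"
  shows "sequent S hs g"
proof -
  have "fv (subst p a x) \<subseteq> (fv p - {a}) \<union> {x}" by (rule fv_subst_sub)
  then have "fv (Imp (All a (Imp (BAll x a (subst p a x)) p)) (All a p)) \<subseteq> fv p - {a}"
    using assms(1,2) by (auto simp: BAll_def)
  then show ?thesis
    using cut[of S hs _ g] assms(4) proves_SetInd[OF assms(1-3)] unfolding sequent_def by auto
qed

section \<open>Elementary set theory in IKP\<close>

text \<open>Set-theoretic facts are stated as closed formulas, so that later derivations can take them as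
  hypotheses. Their proofs are scripts of the sequent rules above, with eigenvariables and witnesses
  named by hand; the \<open>simp\<close> after each rule discharges its side conditions (index bounds, shape of
  the addressed hypothesis, freshness).\<close>

lemmas fm_defs = Iff_def BAll_def BEx_def subset_fm_def is_sing_def is_upair_def is_pair_def is_fun_def
  is_trans_def is_ord_def relpl_def is_plord_def PlUb_def Exponentiation_def Powerset_def
  is_ind_def Let_def fr_def

text \<open>Used to let simp see the outermost connective of a named formula without unfolding it
  in the hypothesis lists.\<close>

lemma fm_selectors_cong:
  "p = q \<Longrightarrow> isA p = isA q \<and> isE p = isE q \<and> isC p = isC q \<and> isI p = isI q
    \<and> qv p = qv q \<and> qb p = qb q \<and> lhs p = lhs q \<and> rhs p = rhs q"
  by simp

context
begin

declare fm_defs[simp]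

definition SingUnique :: fm where
  "SingUnique = All 20001 (All 20002 (All 20003 (Imp (is_sing 20001 20003) (Imp (is_sing 20002 20003) (Eq 20001 20002)))))"

lemma fv_SingUnique[simp]: "fv SingUnique = {}" by (simp add: SingUnique_def)
lemmas [simp] = fm_selectors_cong[OF SingUnique_def]

lemma proves_SingUnique: "proves [Ext_ren] SingUnique"
  unfolding SingUnique_def
  apply (rule sequent_closed; simp?)
  apply (rule all_R; simp?)
  apply (rule all_R; simp?)
  apply (rule all_R; simp?)
  apply (rule imp_R; simp?)
  apply (rule imp_R; simp?)
  apply (rule conj_L[where i=1]; simp?)
  apply (rule conj_L[where i=2]; simp?)
  apply (rule ext_R[where z=20010]; simp?)
  apply (rule all_L[where i=3 and y=20010]; simp?)
  apply (rule imp_L[where i=8]; simp?)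
  apply (rule hyp; simp?)
  apply (rule eq_sym_L[where i=9]; simp?)
  apply (rule eq_L[where i=6 and j=10]; simp?)
  apply (rule hyp; simp?)
  apply (rule all_L[where i=5 and y=20010]; simp?)
  apply (rule imp_L[where i=8]; simp?)
  apply (rule hyp; simp?)
  apply (rule eq_sym_L[where i=9]; simp?)
  apply (rule eq_L[where i=4 and j=10]; simp?)
  apply (rule hyp; simp?)
  done

definition UpairUnique :: fm where
  "UpairUnique = All 20101 (All 20102 (All 20103 (All 20104 (Imp (is_upair 20101 20103 20104) (Imp (is_upair 20102 20103 20104) (Eq 20101 20102))))))"

lemma fv_UpairUnique[simp]: "fv UpairUnique = {}" by (simp add: UpairUnique_def)
lemmas [simp] = fm_selectors_cong[OF UpairUnique_def]

lemma proves_UpairUnique: "proves [Ext_ren] UpairUnique"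
  unfolding UpairUnique_def
  apply (rule sequent_closed; simp?)
  apply (rule all_R; simp?)
  apply (rule all_R; simp?)
  apply (rule all_R; simp?)
  apply (rule all_R; simp?)
  apply (rule imp_R; simp?)
  apply (rule imp_R; simp?)
  apply (rule conj_L[where i=1]; simp?)
  apply (rule conj_L[where i=4]; simp?)
  apply (rule conj_L[where i=2]; simp?)
  apply (rule conj_L[where i=8]; simp?)
  apply (rule ext_R[where z=20110]; simp?)
  apply (rule all_L[where i=3 and y=20110]; simp?)
  apply (rule imp_L[where i=12]; simp?)
  apply (rule hyp; simp?)
  apply (rule disj_L[where i=13]; simp?)
  apply (rule eq_sym_L[where i=14]; simp?)
  apply (rule eq_L[where i=9 and j=15]; simp?)
  apply (rule hyp; simp?)
  apply (rule eq_sym_L[where i=14]; simp?)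
  apply (rule eq_L[where i=10 and j=15]; simp?)
  apply (rule hyp; simp?)
  apply (rule all_L[where i=7 and y=20110]; simp?)
  apply (rule imp_L[where i=12]; simp?)
  apply (rule hyp; simp?)
  apply (rule disj_L[where i=13]; simp?)
  apply (rule eq_sym_L[where i=14]; simp?)
  apply (rule eq_L[where i=5 and j=15]; simp?)
  apply (rule hyp; simp?)
  apply (rule eq_sym_L[where i=14]; simp?)
  apply (rule eq_L[where i=6 and j=15]; simp?)
  apply (rule hyp; simp?)
  done

definition PairUnique :: fm where
  "PairUnique = All 20201 (All 20202 (All 20203 (All 20204 (Imp (is_pair 20201 20203 20204) (Imp (is_pair 20202 20203 20204) (Eq 20201 20202))))))"

lemma fv_PairUnique[simp]: "fv PairUnique = {}" by (simp add: PairUnique_def)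
lemmas [simp] = fm_selectors_cong[OF PairUnique_def]

lemma proves_PairUnique: "proves [Ext_ren, SingUnique, UpairUnique] PairUnique"
  unfolding PairUnique_def
  apply (rule sequent_closed; simp?)
  apply (rule all_R; simp?)
  apply (rule all_R; simp?)
  apply (rule all_R; simp?)
  apply (rule all_R; simp?)
  apply (rule imp_R; simp?)
  apply (rule imp_R; simp?)
  apply (rule conj_L[where i=3]; simp?)
  apply (rule conj_L[where i=6]; simp?)
  apply (rule conj_L[where i=4]; simp?)
  apply (rule conj_L[where i=10]; simp?)
  apply (rule ext_R[where z=20210]; simp?)
  apply (rule all_L[where i=5 and y=20210]; simp?)
  apply (rule imp_L[where i=14]; simp?)
  apply (rule hyp; simp?)
  apply (rule disj_L[where i=15]; simp?)
  apply (rule ex_L[where i=11 and w=20211]; simp?)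
  apply (rule conj_L[where i=17]; simp?)
  apply (rule all_L[where i=1 and y=20210]; simp?)
  apply (rule all_L[where i=20 and y=20211]; simp?)
  apply (rule all_L[where i=21 and y=20203]; simp?)
  apply (rule imp_L_alpha[where i=22 and j=16]; simp?)
  apply (rule imp_L_alpha[where i=23 and j=19]; simp?)
  apply (rule eq_sym_L[where i=24]; simp?)
  apply (rule eq_L[where i=18 and j=25]; simp?)
  apply (rule hyp; simp?)
  apply (rule ex_L[where i=12 and w=20211]; simp?)
  apply (rule conj_L[where i=17]; simp?)
  apply (rule all_L[where i=2 and y=20210]; simp?)
  apply (rule all_L[where i=20 and y=20211]; simp?)
  apply (rule all_L[where i=21 and y=20203]; simp?)
  apply (rule all_L[where i=22 and y=20204]; simp?)
  apply (rule imp_L_alpha[where i=23 and j=16]; simp?)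
  apply (rule imp_L_alpha[where i=24 and j=19]; simp?)
  apply (rule eq_sym_L[where i=25]; simp?)
  apply (rule eq_L[where i=18 and j=26]; simp?)
  apply (rule hyp; simp?)
  apply (rule all_L[where i=9 and y=20210]; simp?)
  apply (rule imp_L[where i=14]; simp?)
  apply (rule hyp; simp?)
  apply (rule disj_L[where i=15]; simp?)
  apply (rule ex_L[where i=7 and w=20211]; simp?)
  apply (rule conj_L[where i=17]; simp?)
  apply (rule all_L[where i=1 and y=20210]; simp?)
  apply (rule all_L[where i=20 and y=20211]; simp?)
  apply (rule all_L[where i=21 and y=20203]; simp?)
  apply (rule imp_L_alpha[where i=22 and j=16]; simp?)
  apply (rule imp_L_alpha[where i=23 and j=19]; simp?)
  apply (rule eq_sym_L[where i=24]; simp?)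
  apply (rule eq_L[where i=18 and j=25]; simp?)
  apply (rule hyp; simp?)
  apply (rule ex_L[where i=8 and w=20211]; simp?)
  apply (rule conj_L[where i=17]; simp?)
  apply (rule all_L[where i=2 and y=20210]; simp?)
  apply (rule all_L[where i=20 and y=20211]; simp?)
  apply (rule all_L[where i=21 and y=20203]; simp?)
  apply (rule all_L[where i=22 and y=20204]; simp?)
  apply (rule imp_L_alpha[where i=23 and j=16]; simp?)
  apply (rule imp_L_alpha[where i=24 and j=19]; simp?)
  apply (rule eq_sym_L[where i=25]; simp?)
  apply (rule eq_L[where i=18 and j=26]; simp?)
  apply (rule hyp; simp?)
  done

definition PairInject :: fm where
  "PairInject = All 20305 (All 20301 (All 20302 (All 20303 (All 20304 (Imp (is_pair 20305 20301 20302) (Imp (is_pair 20305 20303 20304) (Conj (Eq 20301 20303) (Eq 20302 20304))))))))"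

lemma fv_PairInject[simp]: "fv PairInject = {}" by (simp add: PairInject_def)
lemmas [simp] = fm_selectors_cong[OF PairInject_def]

lemma proves_PairInject: "proves [] PairInject"
  unfolding PairInject_def
  apply (rule sequent_closed; simp?)
  apply (rule all_R; simp?)
  apply (rule all_R; simp?)
  apply (rule all_R; simp?)
  apply (rule all_R; simp?)
  apply (rule all_R; simp?)
  apply (rule imp_R; simp?)
  apply (rule imp_R; simp?)
  apply (rule conj_L[where i=0]; simp?)
  apply (rule conj_L[where i=3]; simp?)
  apply (rule conj_L[where i=1]; simp?)
  apply (rule conj_L[where i=7]; simp?)
  apply (rule ex_L[where i=4 and w=20310]; simp?)
  apply (rule conj_L[where i=10]; simp?)
  apply (rule conj_L[where i=12]; simp?)
  apply (rule ex_L[where i=5 and w=20320]; simp?)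
  apply (rule conj_L[where i=15]; simp?)
  apply (rule conj_L[where i=17]; simp?)
  apply (rule conj_L[where i=19]; simp?)
  apply (rule ex_L[where i=8 and w=20330]; simp?)
  apply (rule conj_L[where i=22]; simp?)
  apply (rule conj_L[where i=24]; simp?)
  apply (rule ex_L[where i=9 and w=20340]; simp?)
  apply (rule conj_L[where i=27]; simp?)
  apply (rule conj_L[where i=29]; simp?)
  apply (rule conj_L[where i=31]; simp?)
  apply (rule cut[where a="Eq 20301 20303"]; simp?)
  apply (rule all_L[where i=6 and y=20310]; simp?)
  apply (rule imp_L[where i=34]; simp?)
  apply (rule hyp; simp?)
  apply (rule disj_L[where i=35]; simp?)
  apply (rule conj_L[where i=36]; simp?)
  apply (rule all_L[where i=37 and y=20301]; simp?)
  apply (rule imp_L[where i=39]; simp?)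
  apply (rule hyp; simp?)
  apply (rule hyp; simp?)
  apply (rule conj_L[where i=36]; simp?)
  apply (rule conj_L[where i=38]; simp?)
  apply (rule all_L[where i=13 and y=20303]; simp?)
  apply (rule imp_L[where i=41]; simp?)
  apply (rule hyp; simp?)
  apply (rule eq_sym_L[where i=42]; simp?)
  apply (rule hyp; simp?)
  apply (rule cut[where a="Imp (Eq 20304 20301) (Eq 20302 20304)"]; simp?)
  apply (rule imp_R; simp?)
  apply (rule all_L[where i=6 and y=20320]; simp?)
  apply (rule imp_L[where i=36]; simp?)
  apply (rule hyp; simp?)
  apply (rule disj_L[where i=37]; simp?)
  apply (rule conj_L[where i=38]; simp?)
  apply (rule all_L[where i=39 and y=20302]; simp?)
  apply (rule imp_L[where i=41]; simp?)
  apply (rule hyp; simp?)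
  apply (rule eq_sym_L[where i=34]; simp?)
  apply (rule eq_L[where i=42 and j=43]; simp?)
  apply (rule eq_sym_L[where i=35]; simp?)
  apply (rule eq_L[where i=44 and j=45]; simp?)
  apply (rule hyp; simp?)
  apply (rule conj_L[where i=38]; simp?)
  apply (rule all_L[where i=39 and y=20302]; simp?)
  apply (rule imp_L[where i=41]; simp?)
  apply (rule hyp; simp?)
  apply (rule disj_L[where i=42]; simp?)
  apply (rule eq_sym_L[where i=34]; simp?)
  apply (rule eq_L[where i=43 and j=44]; simp?)
  apply (rule eq_sym_L[where i=35]; simp?)
  apply (rule eq_L[where i=45 and j=46]; simp?)
  apply (rule hyp; simp?)
  apply (rule hyp; simp?)
  apply (rule cut[where a="Eq 20302 20304"]; simp?)
  apply (rule all_L[where i=2 and y=20340]; simp?)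
  apply (rule imp_L[where i=36]; simp?)
  apply (rule hyp; simp?)
  apply (rule disj_L[where i=37]; simp?)
  apply (rule conj_L[where i=38]; simp?)
  apply (rule all_L[where i=39 and y=20304]; simp?)
  apply (rule imp_L[where i=41]; simp?)
  apply (rule hyp; simp?)
  apply (rule imp_L[where i=35]; simp?)
  apply (rule hyp; simp?)
  apply (rule hyp; simp?)
  apply (rule conj_L[where i=38]; simp?)
  apply (rule all_L[where i=39 and y=20304]; simp?)
  apply (rule imp_L[where i=41]; simp?)
  apply (rule hyp; simp?)
  apply (rule disj_L[where i=42]; simp?)
  apply (rule imp_L[where i=35]; simp?)
  apply (rule hyp; simp?)
  apply (rule hyp; simp?)
  apply (rule eq_sym_L[where i=43]; simp?)
  apply (rule hyp; simp?)
  apply (rule conj_R)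
  apply (rule hyp; simp?)
  apply (rule hyp; simp?)
  done

definition PairExists :: fm where
  "PairExists = All 20401 (All 20402 (Ex 20403 (is_pair 20403 20401 20402)))"

lemma fv_PairExists[simp]: "fv PairExists = {}" by (simp add: PairExists_def)
lemmas [simp] = fm_selectors_cong[OF PairExists_def]

lemma proves_PairExists: "proves [Pair_ren] PairExists"
  unfolding PairExists_def
  apply (rule sequent_closed; simp?)
  apply (rule all_R; simp?)
  apply (rule all_R; simp?)
  apply (rule pair_obtain[where a=20401 and b=20401 and w=20410]; simp?)
  apply (rule conj_L[where i=1]; simp?)
  apply (rule sep_obtain[where a=20410 and b=20420 and x=20409 and p="Eq 20409 20401"]; simp?)
  apply (rule pair_obtain[where a=20401 and b=20402 and w=20430]; simp?)
  apply (rule conj_L[where i=5]; simp?)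
  apply (rule sep_obtain[where a=20430 and b=20440 and x=20409 and p="Disj (Eq 20409 20401) (Eq 20409 20402)"]; simp?)
  apply (rule pair_obtain[where a=20420 and b=20440 and w=20450]; simp?)
  apply (rule conj_L[where i=9]; simp?)
  apply (rule sep_obtain[where a=20450 and b=20460 and x=20409 and p="Disj (Eq 20409 20420) (Eq 20409 20440)"]; simp?)
  apply (rule cut[where a="is_sing 20420 20401"]; simp?)
  apply (rule conj_R)
  apply (rule all_R; simp?)
  apply (rule imp_R; simp?)
  apply (rule all_L[where i=4 and y=20421]; simp?)
  apply (rule conj_L[where i=14]; simp?)
  apply (rule imp_L[where i=15]; simp?)
  apply (rule hyp; simp?)
  apply (rule conj_L[where i=17]; simp?)
  apply (rule hyp; simp?)
  apply (rule all_L[where i=4 and y=20401]; simp?)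
  apply (rule conj_L[where i=13]; simp?)
  apply (rule imp_L[where i=15]; simp?)
  apply (rule conj_R)
  apply (rule hyp; simp?)
  apply (rule refl_R)
  apply (rule hyp; simp?)
  apply (rule cut[where a="is_upair 20440 20401 20402"]; simp?)
  apply (rule conj_R)
  apply (rule all_R; simp?)
  apply (rule imp_R; simp?)
  apply (rule all_L[where i=8 and y=20441]; simp?)
  apply (rule conj_L[where i=15]; simp?)
  apply (rule imp_L[where i=16]; simp?)
  apply (rule hyp; simp?)
  apply (rule conj_L[where i=18]; simp?)
  apply (rule hyp; simp?)
  apply (rule conj_R)
  apply (rule all_L[where i=8 and y=20401]; simp?)
  apply (rule conj_L[where i=14]; simp?)
  apply (rule imp_L[where i=16]; simp?)
  apply (rule conj_R)
  apply (rule hyp; simp?)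
  apply (rule disj_R1)
  apply (rule refl_R)
  apply (rule hyp; simp?)
  apply (rule all_L[where i=8 and y=20402]; simp?)
  apply (rule conj_L[where i=14]; simp?)
  apply (rule imp_L[where i=16]; simp?)
  apply (rule conj_R)
  apply (rule hyp; simp?)
  apply (rule disj_R2)
  apply (rule refl_R)
  apply (rule hyp; simp?)
  apply (rule ex_R[where y=20460]; simp?)
  apply (rule conj_R)
  apply (rule all_R; simp?)
  apply (rule imp_R; simp?)
  apply (rule all_L[where i=12 and y=20404]; simp?)
  apply (rule conj_L[where i=16]; simp?)
  apply (rule imp_L[where i=17]; simp?)
  apply (rule hyp; simp?)
  apply (rule conj_L[where i=19]; simp?)
  apply (rule disj_L[where i=21]; simp?)
  apply (rule disj_R1)
  apply (rule eq_sym_L[where i=22]; simp?)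
  apply (rule eq_L[where i=13 and j=23]; simp?)
  apply (rule hyp_alpha[where j=24]; simp?)
  apply (rule disj_R2)
  apply (rule eq_sym_L[where i=22]; simp?)
  apply (rule eq_L[where i=14 and j=23]; simp?)
  apply (rule hyp_alpha[where j=24]; simp?)
  apply (rule conj_R)
  apply (rule ex_R[where y=20420]; simp?)
  apply (rule conj_R)
  apply (rule all_L[where i=12 and y=20420]; simp?)
  apply (rule conj_L[where i=15]; simp?)
  apply (rule imp_L[where i=17]; simp?)
  apply (rule conj_R)
  apply (rule hyp; simp?)
  apply (rule disj_R1)
  apply (rule refl_R)
  apply (rule hyp; simp?)
  apply (rule hyp_alpha[where j=13]; simp?)
  apply (rule ex_R[where y=20440]; simp?)
  apply (rule conj_R)
  apply (rule all_L[where i=12 and y=20440]; simp?)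
  apply (rule conj_L[where i=15]; simp?)
  apply (rule imp_L[where i=17]; simp?)
  apply (rule conj_R)
  apply (rule hyp; simp?)
  apply (rule disj_R2)
  apply (rule refl_R)
  apply (rule hyp; simp?)
  apply (rule hyp_alpha[where j=14]; simp?)
  done

definition ProductExists :: fm where
  "ProductExists = All 20501 (All 20502 (Ex 20503 (BAll 20504 20501 (BAll 20505 20502 (BEx 20506 20503 (is_pair 20506 20504 20505))))))"

lemma fv_ProductExists[simp]: "fv ProductExists = {}" by (simp add: ProductExists_def)
lemmas [simp] = fm_selectors_cong[OF ProductExists_def]

lemma proves_ProductExists: "proves [Union_ren, PairExists] ProductExists"
  unfolding ProductExists_def
  apply (rule sequent_closed; simp?)
  apply (rule all_R; simp?)
  apply (rule all_R; simp?)
  apply (rule coll_obtain[where a=20501 and b=20510 and x=20504 and y=20520 and p="BAll 20505 20502 (BEx 20506 20520 (is_pair 20506 20504 20505))"]; simp?)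
  apply (rule all_R; simp?)
  apply (rule imp_R; simp?)
  apply (rule coll_obtain[where a=20502 and b=20530 and x=20505 and y=20506 and p="is_pair 20506 20504 20505"]; simp?)
  apply (rule all_R; simp?)
  apply (rule imp_R; simp?)
  apply (rule all_L[where i=1 and y=20504]; simp?)
  apply (rule all_L[where i=4 and y=20505]; simp?)
  apply (rule ex_L[where i=5 and w=20540]; simp?)
  apply (rule ex_R[where y=20540]; simp?)
  apply (rule hyp_alpha[where j=6]; simp?)
  apply (rule ex_R[where y=20530]; simp?)
  apply (rule hyp; simp?)
  apply (rule union_obtain[where a=20510 and w=20550]; simp?)
  apply (rule ex_R[where y=20550]; simp?)
  apply (rule all_R; simp?)
  apply (rule imp_R; simp?)
  apply (rule all_R; simp?)
  apply (rule imp_R; simp?)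
  apply (rule all_L[where i=2 and y=20504]; simp?)
  apply (rule imp_L[where i=6]; simp?)
  apply (rule hyp; simp?)
  apply (rule ex_L[where i=7 and w=20560]; simp?)
  apply (rule conj_L[where i=8]; simp?)
  apply (rule all_L[where i=10 and y=20505]; simp?)
  apply (rule imp_L[where i=11]; simp?)
  apply (rule hyp; simp?)
  apply (rule ex_L[where i=12 and w=20570]; simp?)
  apply (rule conj_L[where i=13]; simp?)
  apply (rule all_L[where i=3 and y=20560]; simp?)
  apply (rule imp_L[where i=16]; simp?)
  apply (rule hyp; simp?)
  apply (rule all_L[where i=17 and y=20570]; simp?)
  apply (rule imp_L[where i=18]; simp?)
  apply (rule hyp; simp?)
  apply (rule ex_R[where y=20570]; simp?)
  apply (rule conj_R)
  apply (rule hyp; simp?)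
  apply (rule hyp; simp?)
  done

definition PlOrdMemRelpl :: fm where
  "PlOrdMemRelpl = All 20601 (Imp (is_plord 20601) (BAll 20602 20601 (relpl 20601 20602)))"

lemma fv_PlOrdMemRelpl[simp]: "fv PlOrdMemRelpl = {}" by (simp add: PlOrdMemRelpl_def)
lemmas [simp] = fm_selectors_cong[OF PlOrdMemRelpl_def]

lemma proves_PlOrdMemRelpl: "proves [] PlOrdMemRelpl"
  unfolding PlOrdMemRelpl_def
  apply (rule sequent_closed; simp?)
  apply (rule all_R; simp?)
  apply (rule imp_R; simp?)
  apply (rule conj_L[where i=0]; simp?)
  apply (rule conj_L[where i=1]; simp?)
  apply (rule setind_L[where a=20610 and x=20640 and p="BAll 20620 20601 (BAll 20630 20601 (Imp (Mem 20610 20630) (Imp (subset_fm 20620 20610) (Mem 20620 20630))))"]; simp?)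
  apply (rule imp_L[where i=5]; simp?)
  apply (rule all_R; simp?)
  apply (rule imp_R; simp?)
  apply (rule all_R; simp?)
  apply (rule imp_R; simp?)
  apply (rule all_R; simp?)
  apply (rule imp_R; simp?)
  apply (rule imp_R; simp?)
  apply (rule imp_R; simp?)
  apply (rule all_L[where i=3 and y=20630]; simp?)
  apply (rule imp_L[where i=11]; simp?)
  apply (rule hyp; simp?)
  apply (rule all_L[where i=12 and y=20610]; simp?)
  apply (rule imp_L[where i=13]; simp?)
  apply (rule hyp; simp?)
  apply (rule all_L[where i=2 and y=20610]; simp?)
  apply (rule imp_L[where i=15]; simp?)
  apply (rule hyp; simp?)
  apply (rule all_L[where i=16 and y=20620]; simp?)
  apply (rule imp_L_alpha[where i=17 and j=10]; simp?)
  apply (rule imp_L[where i=18]; simp?)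
  apply (rule all_R; simp?)
  apply (rule imp_R; simp?)
  apply (rule all_R; simp?)
  apply (rule imp_R; simp?)
  apply (rule imp_R; simp?)
  apply (rule all_L[where i=10 and y=20604]; simp?)
  apply (rule imp_L[where i=22]; simp?)
  apply (rule hyp; simp?)
  apply (rule all_L[where i=6 and y=20604]; simp?)
  apply (rule imp_L[where i=24]; simp?)
  apply (rule hyp; simp?)
  apply (rule all_L[where i=25 and y=20605]; simp?)
  apply (rule imp_L[where i=26]; simp?)
  apply (rule hyp; simp?)
  apply (rule all_L[where i=27 and y=20620]; simp?)
  apply (rule imp_L[where i=28]; simp?)
  apply (rule hyp; simp?)
  apply (rule imp_L[where i=29]; simp?)
  apply (rule hyp; simp?)
  apply (rule imp_L_alpha[where i=30 and j=21]; simp?)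
  apply (rule hyp; simp?)
  apply (rule conj_L[where i=19]; simp?)
  apply (rule all_L[where i=21 and y=20630]; simp?)
  apply (rule imp_L[where i=22]; simp?)
  apply (rule hyp; simp?)
  apply (rule imp_L[where i=23]; simp?)
  apply (rule hyp; simp?)
  apply (rule hyp; simp?)
  apply (rule all_R; simp?)
  apply (rule imp_R; simp?)
  apply (rule all_R; simp?)
  apply (rule imp_R; simp?)
  apply (rule all_R; simp?)
  apply (rule imp_R; simp?)
  apply (rule imp_R; simp?)
  apply (rule all_L[where i=6 and y=20603]; simp?)
  apply (rule all_L[where i=11 and y=20604]; simp?)
  apply (rule imp_L[where i=12]; simp?)
  apply (rule hyp; simp?)
  apply (rule all_L[where i=13 and y=20602]; simp?)
  apply (rule imp_L[where i=14]; simp?)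
  apply (rule hyp; simp?)
  apply (rule imp_L[where i=15]; simp?)
  apply (rule hyp; simp?)
  apply (rule imp_L_alpha[where i=16 and j=10]; simp?)
  apply (rule hyp; simp?)
  done

definition EmptyExists :: fm where
  "EmptyExists = Ex 200 (BAll 9402 200 Bot)"

lemma fv_EmptyExists[simp]: "fv EmptyExists = {}" by (simp add: EmptyExists_def)
lemmas [simp] = fm_selectors_cong[OF EmptyExists_def]

lemma proves_EmptyExists: "proves [Pair_ren] EmptyExists"
  unfolding EmptyExists_def
  apply (rule sequent_closed; simp?)
  apply (rule pair_obtain[where a=0 and b=0 and w=100]; simp?)
  apply (rule sep_obtain[where a=100 and b=200 and x=9401 and p="Bot"]; simp?)
  apply (rule ex_R[where y=200]; simp?)
  apply (rule all_R; simp?)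
  apply (rule imp_R; simp?)
  apply (rule all_L[where i=2 and y=9402]; simp?)
  apply (rule conj_L[where i=4]; simp?)
  apply (rule imp_L[where i=5]; simp?)
  apply (rule hyp; simp?)
  apply (rule conj_L[where i=7]; simp?)
  apply (rule bot_L; simp?)
  done

definition EmptyPlOrd :: fm where
  "EmptyPlOrd = All 200 (Imp (BAll 9402 200 Bot) (is_plord 200))"

lemma fv_EmptyPlOrd[simp]: "fv EmptyPlOrd = {}" by (simp add: EmptyPlOrd_def)
lemmas [simp] = fm_selectors_cong[OF EmptyPlOrd_def]

lemma proves_EmptyPlOrd: "proves [] EmptyPlOrd"
  unfolding EmptyPlOrd_def
  apply (rule sequent_closed; simp?)
  apply (rule all_R; simp?)
  apply (rule imp_R; simp?)
  apply (rule conj_R)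
  apply (rule conj_R)
  apply (rule all_R; simp?)
  apply (rule imp_R; simp?)
  apply (rule all_L[where i=0 and y=201]; simp?)
  apply (rule imp_L[where i=2]; simp?)
  apply (rule hyp; simp?)
  apply (rule bot_L; simp?)
  apply (rule all_R; simp?)
  apply (rule imp_R; simp?)
  apply (rule all_L[where i=0 and y=201]; simp?)
  apply (rule imp_L[where i=2]; simp?)
  apply (rule hyp; simp?)
  apply (rule bot_L; simp?)
  apply (rule all_R; simp?)
  apply (rule imp_R; simp?)
  apply (rule all_L[where i=0 and y=201]; simp?)
  apply (rule imp_L[where i=2]; simp?)
  apply (rule hyp; simp?)
  apply (rule bot_L; simp?)
  done

text \<open>\<open>relpl_subsets \<phi>\<close> says that \<open>\<phi>\<close> holds of \<open>\<alpha> = 0\<close> and \<open>\<beta> = 1\<close> whenever \<open>\<alpha>\<close> is a plump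
  ordinal and \<open>\<beta>\<close> consists of the relatively plump subsets of \<open>\<alpha>\<close>, with \<open>100 = P(\<alpha>)\<close>.\<close>

definition relpl_subsets :: "fm \<Rightarrow> fm" where
  "relpl_subsets \<phi> = All 0 (All 100 (All 1 (Imp (is_plord 0) (Imp (All 9103 (Iff (Mem 9103 100) (BAll 9104 9103 (Mem 9104 0))))
     (Imp (All 9301 (Iff (Mem 9301 1) (Conj (Mem 9301 100) (relpl 0 9301)))) \<phi>)))))"

lemma fv_relpl_subsets[simp]: "fv (relpl_subsets \<phi>) = fv \<phi> - {0, 100, 1}"
  by (auto simp: relpl_subsets_def)

lemmas [simp] = fm_selectors_cong[OF relpl_subsets_def]

definition RelplSubsetsSuperset :: fm where
  "RelplSubsetsSuperset = relpl_subsets (BAll 9401 0 (Mem 9401 1))"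

lemma fv_RelplSubsetsSuperset[simp]: "fv RelplSubsetsSuperset = {}" by (simp add: RelplSubsetsSuperset_def)
lemmas [simp] = fm_selectors_cong[OF RelplSubsetsSuperset_def]

lemma proves_RelplSubsetsSuperset: "proves [PlOrdMemRelpl] RelplSubsetsSuperset"
  unfolding RelplSubsetsSuperset_def relpl_subsets_def
  apply (rule sequent_closed; simp?)
  apply (rule all_R; simp?)
  apply (rule all_R; simp?)
  apply (rule all_R; simp?)
  apply (rule imp_R; simp?)
  apply (rule alpha_L[where j=1 and q="rename (\<lambda>v. v + 9200) id (is_plord 0)"]; simp?)
  apply (rule all_L[where i=0 and y=0]; simp?)
  apply (rule imp_L_alpha[where i=3 and j=2]; simp?)
  apply (rule conj_L[where i=2]; simp?)
  apply (rule conj_L[where i=5]; simp?)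
  apply (rule imp_R; simp?)
  apply (rule imp_R; simp?)
  apply (rule all_R; simp?)
  apply (rule imp_R; simp?)
  apply (rule all_L[where i=10 and y=9401]; simp?)
  apply (rule conj_L[where i=12]; simp?)
  apply (rule imp_L[where i=14]; simp?)
  apply (rule conj_R)
  apply (rule all_L[where i=9 and y=9401]; simp?)
  apply (rule conj_L[where i=15]; simp?)
  apply (rule imp_L[where i=17]; simp?)
  apply (rule all_R; simp?)
  apply (rule imp_R; simp?)
  apply (rule all_L[where i=7 and y=9401]; simp?)
  apply (rule imp_L[where i=19]; simp?)
  apply (rule hyp; simp?)
  apply (rule all_L[where i=20 and y=9104]; simp?)
  apply (rule imp_L[where i=21]; simp?)
  apply (rule hyp; simp?)
  apply (rule hyp; simp?)
  apply (rule hyp; simp?)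
  apply (rule all_L[where i=4 and y=9401]; simp?)
  apply (rule imp_L[where i=15]; simp?)
  apply (rule hyp; simp?)
  apply (rule hyp_alpha[where j=16]; simp?)
  apply (rule hyp; simp?)
  done

definition RelplSubsetsOrd :: fm where
  "RelplSubsetsOrd = relpl_subsets (is_ord 1)"

lemma fv_RelplSubsetsOrd[simp]: "fv RelplSubsetsOrd = {}" by (simp add: RelplSubsetsOrd_def)
lemmas [simp] = fm_selectors_cong[OF RelplSubsetsOrd_def]

lemma proves_RelplSubsetsOrd: "proves [PlOrdMemRelpl, RelplSubsetsSuperset] RelplSubsetsOrd"
  unfolding RelplSubsetsOrd_def relpl_subsets_def
  apply (rule sequent_closed; simp?)
  apply (rule all_R; simp?)
  apply (rule all_R; simp?)
  apply (rule all_R; simp?)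
  apply (rule imp_R; simp?)
  apply (rule alpha_L[where j=2 and q="rename (\<lambda>v. v + 9200) id (is_plord 0)"]; simp?)
  apply (rule all_L[where i=0 and y=0]; simp?)
  apply (rule imp_L_alpha[where i=4 and j=3]; simp?)
  apply (rule conj_L[where i=3]; simp?)
  apply (rule conj_L[where i=6]; simp?)
  apply (rule imp_R; simp?)
  apply (rule imp_R; simp?)
  apply (rule all_L[where i=1 and y=0]; simp?)
  apply (rule all_L[where i=12 and y=100]; simp?)
  apply (rule all_L[where i=13 and y=1]; simp?)
  apply (rule imp_L[where i=14]; simp?)
   apply (rule hyp; simp?)
  apply (rule imp_L[where i=15]; simp?)
   apply (rule hyp; simp?)
  apply (rule imp_L[where i=16]; simp?)
   apply (rule hyp; simp?)
  apply (rule conj_R)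
  apply (rule all_R; simp?)
  apply (rule imp_R; simp?)
  apply (rule all_R; simp?)
  apply (rule imp_R; simp?)
  apply (rule all_L[where i=11 and y=2]; simp?)
  apply (rule conj_L[where i=20]; simp?)
  apply (rule imp_L[where i=21]; simp?)
  apply (rule hyp; simp?)
  apply (rule conj_L[where i=23]; simp?)
  apply (rule all_L[where i=10 and y=2]; simp?)
  apply (rule conj_L[where i=26]; simp?)
  apply (rule imp_L[where i=27]; simp?)
  apply (rule hyp; simp?)
  apply (rule all_L[where i=29 and y=3]; simp?)
  apply (rule imp_L[where i=30]; simp?)
  apply (rule hyp; simp?)
  apply (rule all_L[where i=17 and y=3]; simp?)
  apply (rule imp_L[where i=32]; simp?)
  apply (rule hyp; simp?)
  apply (rule hyp; simp?)
  apply (rule all_R; simp?)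
  apply (rule imp_R; simp?)
  apply (rule all_R; simp?)
  apply (rule imp_R; simp?)
  apply (rule all_R; simp?)
  apply (rule imp_R; simp?)
  apply (rule all_L[where i=11 and y=2]; simp?)
  apply (rule conj_L[where i=21]; simp?)
  apply (rule imp_L[where i=22]; simp?)
  apply (rule hyp; simp?)
  apply (rule conj_L[where i=24]; simp?)
  apply (rule all_L[where i=11 and y=2]; simp?)
  apply (rule conj_L[where i=27]; simp?)
  apply (rule imp_L[where i=28]; simp?)
  apply (rule hyp; simp?)
  apply (rule conj_L[where i=30]; simp?)
  apply (rule all_L[where i=10 and y=2]; simp?)
  apply (rule conj_L[where i=33]; simp?)
  apply (rule imp_L[where i=34]; simp?)
  apply (rule hyp; simp?)
  apply (rule all_L[where i=36 and y=3]; simp?)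
  apply (rule imp_L[where i=37]; simp?)
  apply (rule hyp; simp?)
  apply (rule all_L[where i=8 and y=3]; simp?)
  apply (rule imp_L[where i=39]; simp?)
  apply (rule hyp; simp?)
  apply (rule all_L[where i=40 and y=4]; simp?)
  apply (rule imp_L[where i=41]; simp?)
  apply (rule hyp; simp?)
  apply (rule all_L[where i=26 and y=3]; simp?)
  apply (rule imp_L[where i=43]; simp?)
  apply (rule hyp; simp?)
  apply (rule all_L[where i=44 and y=4]; simp?)
  apply (rule imp_L[where i=45]; simp?)
  apply (rule hyp; simp?)
  apply (rule imp_L[where i=46]; simp?)
  apply (rule all_R; simp?)
  apply (rule imp_R; simp?)
  apply (rule all_L[where i=9 and y=3]; simp?)
  apply (rule imp_L[where i=48]; simp?)
  apply (rule hyp; simp?)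
  apply (rule all_L[where i=49 and y=4]; simp?)
  apply (rule imp_L[where i=50]; simp?)
  apply (rule hyp; simp?)
  apply (rule all_L[where i=51 and y=9304]; simp?)
  apply (rule imp_L[where i=52]; simp?)
  apply (rule hyp; simp?)
  apply (rule hyp; simp?)
  apply (rule hyp; simp?)
  done

definition RelplSubsetsPlump :: fm where
  "RelplSubsetsPlump = relpl_subsets (BAll 2 1 (All 3 (Imp (subset_fm 3 2) (Imp (relpl 1 3) (Conj (Mem 3 1) (BAll 4 1 (Imp (Mem 2 4) (Mem 3 4))))))))"

lemma fv_RelplSubsetsPlump[simp]: "fv RelplSubsetsPlump = {}" by (simp add: RelplSubsetsPlump_def)
lemmas [simp] = fm_selectors_cong[OF RelplSubsetsPlump_def]

lemma proves_RelplSubsetsPlump: "proves [PlOrdMemRelpl, RelplSubsetsSuperset] RelplSubsetsPlump"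
  unfolding RelplSubsetsPlump_def relpl_subsets_def
  apply (rule sequent_closed; simp?)
  apply (rule all_R; simp?)
  apply (rule all_R; simp?)
  apply (rule all_R; simp?)
  apply (rule imp_R; simp?)
  apply (rule alpha_L[where j=2 and q="rename (\<lambda>v. v + 9200) id (is_plord 0)"]; simp?)
  apply (rule all_L[where i=0 and y=0]; simp?)
  apply (rule imp_L_alpha[where i=4 and j=3]; simp?)
  apply (rule conj_L[where i=3]; simp?)
  apply (rule conj_L[where i=6]; simp?)
  apply (rule imp_R; simp?)
  apply (rule imp_R; simp?)
  apply (rule all_L[where i=1 and y=0]; simp?)
  apply (rule all_L[where i=12 and y=100]; simp?)
  apply (rule all_L[where i=13 and y=1]; simp?)
  apply (rule imp_L[where i=14]; simp?)
   apply (rule hyp; simp?)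
  apply (rule imp_L[where i=15]; simp?)
   apply (rule hyp; simp?)
  apply (rule imp_L[where i=16]; simp?)
   apply (rule hyp; simp?)
  apply (rule all_R; simp?)
  apply (rule imp_R; simp?)
  apply (rule all_R; simp?)
  apply (rule imp_R; simp?)
  apply (rule imp_R; simp?)
  apply (rule alpha_L[where j=19 and q="BAll 9310 3 (Mem 9310 2)"]; simp?)
  apply (rule all_L[where i=11 and y=2]; simp?)
  apply (rule conj_L[where i=22]; simp?)
  apply (rule imp_L[where i=23]; simp?)
  apply (rule hyp; simp?)
  apply (rule conj_L[where i=25]; simp?)
  apply (rule all_L[where i=10 and y=2]; simp?)
  apply (rule conj_L[where i=28]; simp?)
  apply (rule imp_L[where i=29]; simp?)
  apply (rule hyp; simp?)
  apply (rule cut[where a="BAll 9302 3 (BAll 9303 0 (Imp (BAll 9304 9303 (Mem 9304 9302)) (Mem 9303 3)))"]; simp?)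
  apply (rule all_R; simp?)
  apply (rule imp_R; simp?)
  apply (rule all_R; simp?)
  apply (rule imp_R; simp?)
  apply (rule imp_R; simp?)
  apply (rule all_L[where i=17 and y=9303]; simp?)
  apply (rule imp_L[where i=35]; simp?)
  apply (rule hyp; simp?)
  apply (rule all_L[where i=20 and y=9302]; simp?)
  apply (rule imp_L[where i=37]; simp?)
  apply (rule hyp; simp?)
  apply (rule all_L[where i=38 and y=9303]; simp?)
  apply (rule imp_L[where i=39]; simp?)
  apply (rule hyp; simp?)
  apply (rule imp_L_alpha[where i=40 and j=34]; simp?)
  apply (rule hyp; simp?)
  apply (rule cut[where a="Mem 3 100"]; simp?)
  apply (rule all_L[where i=10 and y=3]; simp?)
  apply (rule conj_L[where i=33]; simp?)
  apply (rule imp_L[where i=35]; simp?)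
  apply (rule all_R; simp?)
  apply (rule imp_R; simp?)
  apply (rule all_L[where i=21 and y=9104]; simp?)
  apply (rule imp_L[where i=37]; simp?)
  apply (rule hyp; simp?)
  apply (rule all_L[where i=31 and y=9104]; simp?)
  apply (rule imp_L[where i=39]; simp?)
  apply (rule hyp; simp?)
  apply (rule hyp; simp?)
  apply (rule hyp; simp?)
  apply (rule conj_R)
  apply (rule all_L[where i=11 and y=3]; simp?)
  apply (rule conj_L[where i=34]; simp?)
  apply (rule imp_L[where i=36]; simp?)
  apply (rule conj_R)
  apply (rule hyp; simp?)
  apply (rule hyp; simp?)
  apply (rule hyp; simp?)
  apply (rule all_R; simp?)
  apply (rule imp_R; simp?)
  apply (rule imp_R; simp?)
  apply (rule all_L[where i=11 and y=4]; simp?)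
  apply (rule conj_L[where i=36]; simp?)
  apply (rule imp_L[where i=37]; simp?)
  apply (rule hyp; simp?)
  apply (rule conj_L[where i=39]; simp?)
  apply (rule all_L[where i=10 and y=4]; simp?)
  apply (rule conj_L[where i=42]; simp?)
  apply (rule imp_L[where i=43]; simp?)
  apply (rule hyp; simp?)
  apply (rule all_L[where i=45 and y=2]; simp?)
  apply (rule imp_L[where i=46]; simp?)
  apply (rule hyp; simp?)
  apply (rule all_L[where i=7 and y=2]; simp?)
  apply (rule imp_L[where i=48]; simp?)
  apply (rule hyp; simp?)
  apply (rule all_L[where i=49 and y=3]; simp?)
  apply (rule imp_L_alpha[where i=50 and j=21]; simp?)
  apply (rule imp_L[where i=51]; simp?)
  apply (rule hyp_alpha[where j=32]; simp?)
  apply (rule conj_L[where i=52]; simp?)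
  apply (rule all_L[where i=41 and y=2]; simp?)
  apply (rule imp_L[where i=55]; simp?)
  apply (rule hyp; simp?)
  apply (rule all_L[where i=56 and y=3]; simp?)
  apply (rule imp_L[where i=57]; simp?)
  apply (rule hyp; simp?)
  apply (rule imp_L_alpha[where i=58 and j=21]; simp?)
  apply (rule hyp; simp?)
  done

definition RelplSubsetsPlOrd :: fm where
  "RelplSubsetsPlOrd = relpl_subsets (Conj (is_plord 1) (Mem 0 1))"

lemma fv_RelplSubsetsPlOrd[simp]: "fv RelplSubsetsPlOrd = {}" by (simp add: RelplSubsetsPlOrd_def)
lemmas [simp] = fm_selectors_cong[OF RelplSubsetsPlOrd_def]

lemma proves_RelplSubsetsPlOrd:
  "proves [PlOrdMemRelpl, RelplSubsetsSuperset, RelplSubsetsOrd, RelplSubsetsPlump] RelplSubsetsPlOrd"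
  unfolding RelplSubsetsPlOrd_def relpl_subsets_def
  apply (rule sequent_closed; simp?)
  apply (rule all_R; simp?)
  apply (rule all_R; simp?)
  apply (rule all_R; simp?)
  apply (rule imp_R; simp?)
  apply (rule alpha_L[where j=4 and q="rename (\<lambda>v. v + 9200) id (is_plord 0)"]; simp?)
  apply (rule all_L[where i=0 and y=0]; simp?)
  apply (rule imp_L_alpha[where i=6 and j=5]; simp?)
  apply (rule conj_L[where i=5]; simp?)
  apply (rule conj_L[where i=8]; simp?)
  apply (rule imp_R; simp?)
  apply (rule imp_R; simp?)
  apply (rule all_L[where i=1 and y=0]; simp?)
  apply (rule all_L[where i=14 and y=100]; simp?)
  apply (rule all_L[where i=15 and y=1]; simp?)
  apply (rule imp_L[where i=16]; simp?)
   apply (rule hyp; simp?)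
  apply (rule imp_L[where i=17]; simp?)
   apply (rule hyp; simp?)
  apply (rule imp_L[where i=18]; simp?)
   apply (rule hyp; simp?)
  apply (rule conj_R; simp?)
  apply (rule conj_R; simp?)
  apply (rule all_L[where i=2 and y=0]; simp?)
  apply (rule all_L[where i=20 and y=100]; simp?)
  apply (rule all_L[where i=21 and y=1]; simp?)
  apply (rule imp_L[where i=22]; simp?)
   apply (rule hyp; simp?)
  apply (rule imp_L[where i=23]; simp?)
   apply (rule hyp; simp?)
  apply (rule imp_L[where i=24]; simp?)
   apply (rule hyp; simp?)
  apply (rule hyp; simp?)
  apply (rule all_L[where i=3 and y=0]; simp?)
  apply (rule all_L[where i=20 and y=100]; simp?)
  apply (rule all_L[where i=21 and y=1]; simp?)
  apply (rule imp_L[where i=22]; simp?)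
   apply (rule hyp; simp?)
  apply (rule imp_L[where i=23]; simp?)
   apply (rule hyp; simp?)
  apply (rule imp_L[where i=24]; simp?)
   apply (rule hyp; simp?)
  apply (rule hyp; simp?)
  apply (rule all_L[where i=13 and y=0]; simp?)
  apply (rule conj_L[where i=20]; simp?)
  apply (rule imp_L[where i=22]; simp?)
  apply (rule conj_R)
  apply (rule all_L[where i=12 and y=0]; simp?)
  apply (rule conj_L[where i=23]; simp?)
  apply (rule imp_L[where i=25]; simp?)
  apply (rule all_R; simp?)
  apply (rule imp_R; simp?)
  apply (rule hyp; simp?)
  apply (rule hyp; simp?)
  apply (rule all_R; simp?)
  apply (rule imp_R; simp?)
  apply (rule all_R; simp?)
  apply (rule imp_R; simp?)
  apply (rule imp_R; simp?)
  apply (rule hyp; simp?)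
  apply (rule hyp; simp?)
  done

section \<open>The two directions\<close>

definition Powerset_ren :: fm where
  "Powerset_ren = rename (\<lambda>v. v + 9101) id Powerset"

lemma Powerset_ren_eq:
  "Powerset_ren = All 9101 (Ex 9102 (All 9103 (Iff (Mem 9103 9102) (BAll 9104 9103 (Mem 9104 9101)))))"
  by (simp add: Powerset_ren_def)

lemma fv_Powerset_ren[simp]: "fv Powerset_ren = {}" by (simp add: Powerset_ren_eq)
lemmas [simp] = fm_selectors_cong[OF Powerset_ren_eq]

definition PlUb_ren :: fm where
  "PlUb_ren = rename (\<lambda>v. v + 9500) id PlUb"

lemma PlUb_ren_eq: "PlUb_ren = All 9500 (Imp (rename (\<lambda>v. v + 9500) (id(0 := 9500)) (is_plord 0))
   (Ex 9501 (Conj (rename (\<lambda>v. v + 9500) (id(0 := 9500, 1 := 9501)) (is_plord 1)) (Mem 9500 9501))))"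
  by (simp add: PlUb_ren_def)

lemma fv_PlUb_ren[simp]: "fv PlUb_ren = {}" by (simp add: PlUb_ren_def)
lemmas [simp] = fm_selectors_cong[OF PlUb_ren_eq]

lemma Powerset_proves_Exponentiation:
  "proves [PairUnique, ProductExists, Powerset_ren] Exponentiation"
  unfolding Exponentiation_def
  apply (rule sequent_closed; simp?)
  apply (rule all_R; simp?)
  apply (rule all_R; simp?)
  apply (rule all_L[where i=1 and y=0]; simp?)
  apply (rule all_L[where i=3 and y=1]; simp?)
  apply (rule ex_L[where i=4 and w=100]; simp?)
  apply (rule all_L[where i=2 and y=100]; simp?)
  apply (rule ex_L[where i=6 and w=200]; simp?)
  apply (rule sep_obtain[where a=200 and b=2 and x=3 and p="is_fun 3 0 1"]; simp?)
  apply (rule ex_R[where y=2]; simp?)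
  apply (rule all_R; simp?)
  apply (rule conj_R)
  apply (rule imp_R; simp?)
  apply (rule all_L[where i=8 and y=3]; simp?)
  apply (rule conj_L[where i=10]; simp?)
  apply (rule imp_L[where i=11]; simp?)
  apply (rule hyp; simp?)
  apply (rule conj_L[where i=13]; simp?)
  apply (rule hyp; simp?)
  apply (rule imp_R; simp?)
  apply (rule all_L[where i=8 and y=3]; simp?)
  apply (rule conj_L[where i=10]; simp?)
  apply (rule imp_L[where i=12]; simp?)
  apply (rule conj_R)
  apply (rule all_L[where i=7 and y=3]; simp?)
  apply (rule conj_L[where i=13]; simp?)
  apply (rule imp_L[where i=15]; simp?)
  apply (rule all_R; simp?)
  apply (rule imp_R; simp?)
  apply (rule conj_L[where i=9]; simp?)
  apply (rule all_L[where i=17 and y=9104]; simp?)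
  apply (rule imp_L[where i=19]; simp?)
  apply (rule hyp; simp?)
  apply (rule ex_L[where i=20 and w=300]; simp?)
  apply (rule conj_L[where i=21]; simp?)
  apply (rule ex_L[where i=23 and w=400]; simp?)
  apply (rule conj_L[where i=24]; simp?)
  apply (rule all_L[where i=5 and y=300]; simp?)
  apply (rule imp_L[where i=27]; simp?)
  apply (rule hyp; simp?)
  apply (rule all_L[where i=28 and y=400]; simp?)
  apply (rule imp_L[where i=29]; simp?)
  apply (rule hyp; simp?)
  apply (rule ex_L[where i=30 and w=500]; simp?)
  apply (rule conj_L[where i=31]; simp?)
  apply (rule all_L[where i=0 and y=9104]; simp?)
  apply (rule all_L[where i=34 and y=500]; simp?)
  apply (rule all_L[where i=35 and y=300]; simp?)
  apply (rule all_L[where i=36 and y=400]; simp?)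
  apply (rule imp_L_alpha[where i=37 and j=26]; simp?)
  apply (rule imp_L_alpha[where i=38 and j=33]; simp?)
  apply (rule eq_sym_L[where i=39]; simp?)
  apply (rule eq_L[where i=32 and j=40]; simp?)
  apply (rule hyp; simp?)
  apply (rule hyp; simp?)
  apply (rule hyp; simp?)
  apply (rule hyp; simp?)
  done

lemma Powerset_proves_PlUb: "proves [RelplSubsetsPlOrd, Powerset_ren] PlUb"
  unfolding PlUb_def
  apply (rule sequent_closed; simp?)
  apply (rule all_R; simp?)
  apply (rule imp_R; simp?)
  apply (rule all_L[where i=1 and y=0]; simp?)
  apply (rule ex_L[where i=3 and w=100]; simp?)
  apply (rule sep_obtain[where a=100 and b=1 and x=9301 and p="relpl 0 9301"]; simp?)
  apply (rule ex_R[where y=1]; simp?)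
  apply (rule all_L[where i=0 and y=0]; simp?)
  apply (rule all_L[where i=6 and y=100]; simp?)
  apply (rule all_L[where i=7 and y=1]; simp?)
  apply (rule imp_L[where i=8]; simp?)
   apply (rule hyp; simp?)
  apply (rule imp_L[where i=9]; simp?)
   apply (rule hyp; simp?)
  apply (rule imp_L[where i=10]; simp?)
   apply (rule hyp; simp?)
  apply (rule hyp; simp?)
  done

definition TruthValuesBounded :: fm where
  "TruthValuesBounded = All 200 (Imp (BAll 9402 200 Bot) (Ex 400 (All 9701 (Imp (BAll 9702 9701 (Eq 9702 200)) (Mem 9701 400)))))"

lemma fv_TruthValuesBounded[simp]: "fv TruthValuesBounded = {}" by (simp add: TruthValuesBounded_def)
lemmas [simp] = fm_selectors_cong[OF TruthValuesBounded_def]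

lemma PlUb_proves_TruthValuesBounded:
  "proves [Ext_ren, PlUb_ren, EmptyPlOrd] TruthValuesBounded"
  unfolding TruthValuesBounded_def
  apply (rule sequent_closed; simp?)
  apply (rule all_R; simp?)
  apply (rule imp_R; simp?)
  apply (rule all_L[where i=2 and y=200]; simp?)
  apply (rule imp_L[where i=4]; simp?)
   apply (rule hyp; simp?)
  apply (rule all_L[where i=1 and y=200]; simp?)
  apply (rule imp_L_alpha[where i=6 and j=5]; simp?)
  apply (rule ex_L[where i=7 and w=300]; simp?)
  apply (rule conj_L[where i=8]; simp?)
  apply (rule all_L[where i=1 and y=300]; simp?)
  apply (rule imp_L_alpha[where i=11 and j=9]; simp?)
  apply (rule ex_L[where i=12 and w=400]; simp?)
  apply (rule conj_L[where i=13]; simp?)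
  apply (rule conj_L[where i=14]; simp?)
  apply (rule ex_R[where y=400]; simp?)
  apply (rule all_R; simp?)
  apply (rule imp_R; simp?)
  apply (rule all_L[where i=17 and y=300]; simp?)
  apply (rule imp_L[where i=19]; simp?)
  apply (rule hyp; simp?)
  apply (rule all_L[where i=20 and y=9701]; simp?)
  apply (rule imp_L[where i=21]; simp?)
  apply (rule all_R; simp?)
  apply (rule imp_R; simp?)
  apply (rule all_L[where i=18 and y=9504]; simp?)
  apply (rule imp_L[where i=23]; simp?)
  apply (rule hyp; simp?)
  apply (rule eq_sym_L[where i=24]; simp?)
  apply (rule eq_L[where i=10 and j=25]; simp?)
  apply (rule hyp; simp?)
  apply (rule imp_L[where i=22]; simp?)
  apply (rule all_R; simp?)
  apply (rule imp_R; simp?)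
  apply (rule all_R; simp?)
  apply (rule imp_R; simp?)
  apply (rule imp_R; simp?)
  apply (rule all_L[where i=18 and y=9504]; simp?)
  apply (rule imp_L[where i=26]; simp?)
  apply (rule hyp; simp?)
  apply (rule cut[where a="Eq 9505 200"]; simp?)
  apply (rule ext_R[where z=9710]; simp?)
  apply (rule all_L[where i=25 and y=9710]; simp?)
  apply (rule imp_L[where i=29]; simp?)
  apply (rule hyp; simp?)
  apply (rule eq_L[where i=30 and j=27]; simp?)
  apply (rule all_L[where i=3 and y=9710]; simp?)
  apply (rule imp_L[where i=32]; simp?)
  apply (rule hyp; simp?)
  apply (rule bot_L; simp?)
  apply (rule all_L[where i=3 and y=9710]; simp?)
  apply (rule imp_L[where i=29]; simp?)
  apply (rule hyp; simp?)
  apply (rule bot_L; simp?)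
  apply (rule eq_L[where i=23 and j=27]; simp?)
  apply (rule eq_sym_L[where i=28]; simp?)
  apply (rule eq_L[where i=29 and j=30]; simp?)
  apply (rule hyp; simp?)
  apply (rule conj_L[where i=23]; simp?)
  apply (rule hyp; simp?)
  done

definition BoundedTruthValuesPowerset :: fm where
  "BoundedTruthValuesPowerset = All 0 (All 200 (All 400 (Imp (All 9701 (Imp (BAll 9702 9701 (Eq 9702 200)) (Mem 9701 400))) (Ex 1 (All 2 (Iff (Mem 2 1) (subset_fm 2 0)))))))"

lemma fv_BoundedTruthValuesPowerset[simp]: "fv BoundedTruthValuesPowerset = {}"
  by (simp add: BoundedTruthValuesPowerset_def)
lemmas [simp] = fm_selectors_cong[OF BoundedTruthValuesPowerset_def]

lemma Exponentiation_proves_BoundedTruthValuesPowerset: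
  "proves [Ext_ren, Pair_ren, PairInject, ProductExists, Exponentiation] BoundedTruthValuesPowerset"
  unfolding BoundedTruthValuesPowerset_def
  apply (rule sequent_closed; simp?)
  apply (rule all_R; simp?)
  apply (rule all_R; simp?)
  apply (rule all_R; simp?)
  apply (rule imp_R; simp?)
  apply (rule pair_obtain[where a=200 and b=200 and w=300]; simp?)
  apply (rule conj_L[where i=6]; simp?)
  apply (rule all_L[where i=4 and y=0]; simp?)
  apply (rule all_L[where i=9 and y=400]; simp?)
  apply (rule ex_L[where i=10 and w=500]; simp?)
  apply (rule coll_obtain[where a=500 and b=600 and x=9801 and y=9802 and p="Conj (BAll 9820 9802 (Conj (Mem 9820 0) (BEx 9811 9801 (BEx 9812 9811 (BEx 9813 9812 (Conj (is_pair 9811 9820 9813) (Mem 200 9813))))))) (BAll 9820 0 (Imp (BEx 9811 9801 (BEx 9812 9811 (BEx 9813 9812 (Conj (is_pair 9811 9820 9813) (Mem 200 9813))))) (Mem 9820 9802)))"]; simp?)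
  apply (rule all_R; simp?)
  apply (rule imp_R; simp?)
  apply (rule sep_obtain[where a=0 and b=700 and x=9820 and p="BEx 9811 9801 (BEx 9812 9811 (BEx 9813 9812 (Conj (is_pair 9811 9820 9813) (Mem 200 9813))))"]; simp?)
  apply (rule ex_R[where y=700]; simp?)
  apply (rule conj_R)
  apply (rule all_R; simp?)
  apply (rule imp_R; simp?)
  apply (rule all_L[where i=13 and y=9820]; simp?)
  apply (rule conj_L[where i=15]; simp?)
  apply (rule imp_L[where i=16]; simp?)
  apply (rule hyp; simp?)
  apply (rule hyp; simp?)
  apply (rule all_R; simp?)
  apply (rule imp_R; simp?)
  apply (rule imp_R; simp?)
  apply (rule all_L[where i=13 and y=9820]; simp?)
  apply (rule conj_L[where i=16]; simp?)
  apply (rule imp_L[where i=18]; simp?)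
  apply (rule conj_R)
  apply (rule hyp; simp?)
  apply (rule hyp; simp?)
  apply (rule hyp; simp?)
  apply (rule sep_obtain[where a=600 and b=800 and x=2 and p="BAll 3 2 (Mem 3 0)"]; simp?)
  apply (rule ex_R[where y=800]; simp?)
  apply (rule all_R; simp?)
  apply (rule conj_R)
  apply (rule imp_R; simp?)
  apply (rule all_L[where i=13 and y=2]; simp?)
  apply (rule conj_L[where i=15]; simp?)
  apply (rule imp_L[where i=16]; simp?)
  apply (rule hyp; simp?)
  apply (rule conj_L[where i=18]; simp?)
  apply (rule hyp; simp?)
  apply (rule imp_R; simp?)
  apply (rule all_L[where i=3 and y=0]; simp?)
  apply (rule all_L[where i=15 and y=400]; simp?)
  apply (rule ex_L[where i=16 and w=900]; simp?)
  apply (rule sep_obtain[where a=900 and b=1000 and x=9830 and p="BEx 9831 0 (BEx 9832 400 (Conj (is_pair 9830 9831 9832) (Conj (Iff (Mem 200 9832) (Mem 9831 2)) (BAll 9839 9832 (Eq 9839 200)))))"]; simp?)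
  apply (rule cut[where a="BAll 9841 0 (BEx 9842 400 (BEx 9843 1000 (Conj (is_pair 9843 9841 9842) (Conj (Iff (Mem 200 9842) (Mem 9841 2)) (BAll 9839 9842 (Eq 9839 200))))))"]; simp?)
  apply (rule all_R; simp?)
  apply (rule imp_R; simp?)
  apply (rule sep_obtain[where a=300 and b=1100 and x=9850 and p="Conj (Eq 9850 200) (Mem 9841 2)"]; simp?)
  apply (rule cut[where a="Conj (Iff (Mem 200 1100) (Mem 9841 2)) (BAll 9839 1100 (Eq 9839 200))"]; simp?)
  apply (rule conj_R)
  apply (rule conj_R)
  apply (rule imp_R; simp?)
  apply (rule all_L[where i=20 and y=200]; simp?)
  apply (rule conj_L[where i=22]; simp?)
  apply (rule imp_L[where i=23]; simp?)
  apply (rule hyp; simp?)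
  apply (rule conj_L[where i=25]; simp?)
  apply (rule conj_L[where i=27]; simp?)
  apply (rule hyp; simp?)
  apply (rule imp_R; simp?)
  apply (rule all_L[where i=20 and y=200]; simp?)
  apply (rule conj_L[where i=22]; simp?)
  apply (rule imp_L[where i=24]; simp?)
  apply (rule conj_R)
  apply (rule hyp; simp?)
  apply (rule conj_R)
  apply (rule refl_R)
  apply (rule hyp; simp?)
  apply (rule hyp; simp?)
  apply (rule all_R; simp?)
  apply (rule imp_R; simp?)
  apply (rule all_L[where i=20 and y=9839]; simp?)
  apply (rule conj_L[where i=22]; simp?)
  apply (rule imp_L[where i=23]; simp?)
  apply (rule hyp; simp?)
  apply (rule conj_L[where i=25]; simp?)
  apply (rule conj_L[where i=27]; simp?)
  apply (rule hyp; simp?)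
  apply (rule cut[where a="Mem 1100 400"]; simp?)
  apply (rule all_L[where i=5 and y=1100]; simp?)
  apply (rule conj_L[where i=21]; simp?)
  apply (rule imp_L_alpha[where i=22 and j=24]; simp?)
  apply (rule hyp; simp?)
  apply (rule all_L[where i=17 and y=9841]; simp?)
  apply (rule imp_L[where i=23]; simp?)
  apply (rule hyp; simp?)
  apply (rule all_L[where i=24 and y=1100]; simp?)
  apply (rule imp_L[where i=25]; simp?)
  apply (rule hyp; simp?)
  apply (rule ex_L[where i=26 and w=1200]; simp?)
  apply (rule conj_L[where i=27]; simp?)
  apply (rule cut[where a="Mem 1200 1000"]; simp?)
  apply (rule all_L[where i=18 and y=1200]; simp?)
  apply (rule conj_L[where i=30]; simp?)
  apply (rule imp_L[where i=32]; simp?)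
  apply (rule conj_R)
  apply (rule hyp; simp?)
  apply (rule ex_R[where y=9841]; simp?)
  apply (rule conj_R)
  apply (rule hyp; simp?)
  apply (rule ex_R[where y=1100]; simp?)
  apply (rule conj_R)
  apply (rule hyp; simp?)
  apply (rule conj_R)
  apply (rule hyp_alpha[where j=29]; simp?)
  apply (rule hyp; simp?)
  apply (rule hyp; simp?)
  apply (rule ex_R[where y=1100]; simp?)
  apply (rule conj_R)
  apply (rule hyp; simp?)
  apply (rule ex_R[where y=1200]; simp?)
  apply (rule conj_R)
  apply (rule hyp; simp?)
  apply (rule conj_R)
  apply (rule hyp_alpha[where j=29]; simp?)
  apply (rule hyp; simp?)
  apply (rule all_L[where i=11 and y=1000]; simp?)
  apply (rule conj_L[where i=20]; simp?)
  apply (rule imp_L[where i=22]; simp?)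
  apply (rule conj_R)
  apply (rule all_R; simp?)
  apply (rule imp_R; simp?)
  apply (rule all_L[where i=18 and y=7]; simp?)
  apply (rule conj_L[where i=24]; simp?)
  apply (rule imp_L[where i=25]; simp?)
  apply (rule hyp; simp?)
  apply (rule conj_L[where i=27]; simp?)
  apply (rule ex_L[where i=29 and w=1300]; simp?)
  apply (rule conj_L[where i=30]; simp?)
  apply (rule ex_L[where i=32 and w=1400]; simp?)
  apply (rule conj_L[where i=33]; simp?)
  apply (rule conj_L[where i=35]; simp?)
  apply (rule ex_R[where y=1300]; simp?)
  apply (rule conj_R)
  apply (rule hyp; simp?)
  apply (rule ex_R[where y=1400]; simp?)
  apply (rule conj_R)
  apply (rule hyp; simp?)
  apply (rule hyp_alpha[where j=36]; simp?)
  apply (rule conj_R)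
  apply (rule all_R; simp?)
  apply (rule imp_R; simp?)
  apply (rule all_L[where i=19 and y=4]; simp?)
  apply (rule imp_L[where i=24]; simp?)
  apply (rule hyp; simp?)
  apply (rule ex_L[where i=25 and w=1500]; simp?)
  apply (rule conj_L[where i=26]; simp?)
  apply (rule ex_L[where i=28 and w=1600]; simp?)
  apply (rule conj_L[where i=29]; simp?)
  apply (rule conj_L[where i=31]; simp?)
  apply (rule ex_R[where y=1500]; simp?)
  apply (rule conj_R)
  apply (rule hyp; simp?)
  apply (rule ex_R[where y=1600]; simp?)
  apply (rule conj_R)
  apply (rule hyp; simp?)
  apply (rule hyp_alpha[where j=32]; simp?)
  apply (rule all_R; simp?)
  apply (rule imp_R; simp?)
  apply (rule all_R; simp?)
  apply (rule imp_R; simp?)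
  apply (rule all_R; simp?)
  apply (rule imp_R; simp?)
  apply (rule all_R; simp?)
  apply (rule imp_R; simp?)
  apply (rule cut[where a="All 9999 (Imp (Mem 9999 1000) (Imp (Conj (is_pair 7 4 5) (subst (is_pair 8 4 6) 8 9999)) (Eq 5 6)))"]; simp?)
  apply (rule all_R; simp?)
  apply (rule imp_R; simp?)
  apply (rule imp_R; simp?)
  apply (rule conj_L[where i=28]; simp?)
  apply (rule all_L[where i=18 and y=7]; simp?)
  apply (rule conj_L[where i=31]; simp?)
  apply (rule imp_L[where i=32]; simp?)
  apply (rule hyp; simp?)
  apply (rule conj_L[where i=34]; simp?)
  apply (rule ex_L[where i=36 and w=1700]; simp?)
  apply (rule conj_L[where i=37]; simp?)
  apply (rule ex_L[where i=39 and w=1800]; simp?)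
  apply (rule conj_L[where i=40]; simp?)
  apply (rule conj_L[where i=42]; simp?)
  apply (rule all_L[where i=2 and y=7]; simp?)
  apply (rule all_L[where i=45 and y=4]; simp?)
  apply (rule all_L[where i=46 and y=5]; simp?)
  apply (rule all_L[where i=47 and y=1700]; simp?)
  apply (rule all_L[where i=48 and y=1800]; simp?)
  apply (rule imp_L_alpha[where i=49 and j=29]; simp?)
  apply (rule imp_L_alpha[where i=50 and j=43]; simp?)
  apply (rule conj_L[where i=51]; simp?)
  apply (rule eq_sym_L[where i=52]; simp?)
  apply (rule eq_L[where i=44 and j=54]; simp?)
  apply (rule eq_sym_L[where i=53]; simp?)
  apply (rule eq_L[where i=55 and j=56]; simp?)
  apply (rule all_L[where i=18 and y=9999]; simp?)
  apply (rule conj_L[where i=58]; simp?)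
  apply (rule imp_L[where i=59]; simp?)
  apply (rule hyp; simp?)
  apply (rule conj_L[where i=61]; simp?)
  apply (rule ex_L[where i=63 and w=1900]; simp?)
  apply (rule conj_L[where i=64]; simp?)
  apply (rule ex_L[where i=66 and w=2000]; simp?)
  apply (rule conj_L[where i=67]; simp?)
  apply (rule conj_L[where i=69]; simp?)
  apply (rule all_L[where i=2 and y=9999]; simp?)
  apply (rule all_L[where i=72 and y=4]; simp?)
  apply (rule all_L[where i=73 and y=6]; simp?)
  apply (rule all_L[where i=74 and y=1900]; simp?)
  apply (rule all_L[where i=75 and y=2000]; simp?)
  apply (rule imp_L_alpha[where i=76 and j=30]; simp?)
  apply (rule imp_L_alpha[where i=77 and j=70]; simp?)
  apply (rule conj_L[where i=78]; simp?)
  apply (rule eq_sym_L[where i=79]; simp?)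
  apply (rule eq_L[where i=71 and j=81]; simp?)
  apply (rule eq_sym_L[where i=80]; simp?)
  apply (rule eq_L[where i=82 and j=83]; simp?)
  apply (rule ext_R[where z=9860]; simp?)
  apply (rule conj_L[where i=57]; simp?)
  apply (rule all_L[where i=87 and y=9860]; simp?)
  apply (rule imp_L[where i=88]; simp?)
  apply (rule hyp; simp?)
  apply (rule eq_L[where i=85 and j=89]; simp?)
  apply (rule conj_L[where i=86]; simp?)
  apply (rule imp_L[where i=91]; simp?)
  apply (rule hyp; simp?)
  apply (rule conj_L[where i=84]; simp?)
  apply (rule conj_L[where i=94]; simp?)
  apply (rule imp_L[where i=97]; simp?)
  apply (rule hyp; simp?)
  apply (rule eq_sym_L[where i=89]; simp?)
  apply (rule eq_L[where i=98 and j=99]; simp?)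
  apply (rule hyp; simp?)
  apply (rule conj_L[where i=84]; simp?)
  apply (rule all_L[where i=87 and y=9860]; simp?)
  apply (rule imp_L[where i=88]; simp?)
  apply (rule hyp; simp?)
  apply (rule eq_L[where i=85 and j=89]; simp?)
  apply (rule conj_L[where i=86]; simp?)
  apply (rule imp_L[where i=91]; simp?)
  apply (rule hyp; simp?)
  apply (rule conj_L[where i=57]; simp?)
  apply (rule conj_L[where i=94]; simp?)
  apply (rule imp_L[where i=97]; simp?)
  apply (rule hyp; simp?)
  apply (rule eq_sym_L[where i=89]; simp?)
  apply (rule eq_L[where i=98 and j=99]; simp?)
  apply (rule hyp; simp?)
  apply (rule all_R; simp?)
  apply (rule all_L[where i=27 and y=8]; simp?)
  apply (rule hyp; simp?)
  apply (rule all_L[where i=12 and y=1000]; simp?)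
  apply (rule imp_L[where i=24]; simp?)
  apply (rule hyp; simp?)
  apply (rule ex_L[where i=25 and w=2100]; simp?)
  apply (rule conj_L[where i=26]; simp?)
  apply (rule conj_L[where i=28]; simp?)
  apply (rule cut[where a="Eq 2100 2"]; simp?)
  apply (rule ext_R[where z=9870]; simp?)
  apply (rule all_L[where i=29 and y=9870]; simp?)
  apply (rule imp_L[where i=32]; simp?)
  apply (rule hyp; simp?)
  apply (rule conj_L[where i=33]; simp?)
  apply (rule ex_L[where i=35 and w=2200]; simp?)
  apply (rule conj_L[where i=36]; simp?)
  apply (rule ex_L[where i=38 and w=2300]; simp?)
  apply (rule conj_L[where i=39]; simp?)
  apply (rule ex_L[where i=41 and w=2400]; simp?)
  apply (rule conj_L[where i=42]; simp?)
  apply (rule conj_L[where i=44]; simp?)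
  apply (rule all_L[where i=18 and y=2200]; simp?)
  apply (rule conj_L[where i=47]; simp?)
  apply (rule imp_L[where i=48]; simp?)
  apply (rule hyp; simp?)
  apply (rule conj_L[where i=50]; simp?)
  apply (rule ex_L[where i=52 and w=2500]; simp?)
  apply (rule conj_L[where i=53]; simp?)
  apply (rule ex_L[where i=55 and w=2600]; simp?)
  apply (rule conj_L[where i=56]; simp?)
  apply (rule conj_L[where i=58]; simp?)
  apply (rule all_L[where i=2 and y=2200]; simp?)
  apply (rule all_L[where i=61 and y=9870]; simp?)
  apply (rule all_L[where i=62 and y=2400]; simp?)
  apply (rule all_L[where i=63 and y=2500]; simp?)
  apply (rule all_L[where i=64 and y=2600]; simp?)
  apply (rule imp_L_alpha[where i=65 and j=45]; simp?)
  apply (rule imp_L_alpha[where i=66 and j=59]; simp?)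
  apply (rule conj_L[where i=67]; simp?)
  apply (rule conj_L[where i=60]; simp?)
  apply (rule conj_L[where i=70]; simp?)
  apply (rule eq_L[where i=46 and j=69]; simp?)
  apply (rule imp_L[where i=72]; simp?)
  apply (rule hyp; simp?)
  apply (rule eq_sym_L[where i=68]; simp?)
  apply (rule eq_L[where i=75 and j=76]; simp?)
  apply (rule hyp; simp?)
  apply (rule all_L[where i=14 and y=9870]; simp?)
  apply (rule imp_L[where i=32]; simp?)
  apply (rule hyp; simp?)
  apply (rule all_L[where i=19 and y=9870]; simp?)
  apply (rule imp_L[where i=34]; simp?)
  apply (rule hyp; simp?)
  apply (rule ex_L[where i=35 and w=2700]; simp?)
  apply (rule conj_L[where i=36]; simp?)
  apply (rule ex_L[where i=38 and w=2800]; simp?)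
  apply (rule conj_L[where i=39]; simp?)
  apply (rule conj_L[where i=41]; simp?)
  apply (rule conj_L[where i=43]; simp?)
  apply (rule conj_L[where i=44]; simp?)
  apply (rule imp_L[where i=47]; simp?)
  apply (rule hyp; simp?)
  apply (rule conj_L[where i=42]; simp?)
  apply (rule conj_L[where i=50]; simp?)
  apply (rule ex_L[where i=52 and w=2900]; simp?)
  apply (rule conj_L[where i=53]; simp?)
  apply (rule conj_L[where i=55]; simp?)
  apply (rule conj_L[where i=57]; simp?)
  apply (rule all_L[where i=30 and y=9870]; simp?)
  apply (rule imp_L[where i=60]; simp?)
  apply (rule hyp; simp?)
  apply (rule imp_L[where i=61]; simp?)
  apply (rule ex_R[where y=2800]; simp?)
  apply (rule conj_R)
  apply (rule hyp; simp?)
  apply (rule ex_R[where y=2900]; simp?)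
  apply (rule conj_R)
  apply (rule hyp; simp?)
  apply (rule ex_R[where y=2700]; simp?)
  apply (rule conj_R)
  apply (rule hyp; simp?)
  apply (rule conj_R)
  apply (rule hyp_alpha[where j=42]; simp?)
  apply (rule hyp; simp?)
  apply (rule hyp; simp?)
  apply (rule eq_L[where i=27 and j=31]; simp?)
  apply (rule all_L[where i=13 and y=2]; simp?)
  apply (rule conj_L[where i=33]; simp?)
  apply (rule imp_L[where i=35]; simp?)
  apply (rule conj_R)
  apply (rule hyp; simp?)
  apply (rule hyp; simp?)
  apply (rule hyp; simp?)
  done

lemma bounded_truth_values_prove_Powerset:
  "proves [EmptyExists, TruthValuesBounded, BoundedTruthValuesPowerset] Powerset"
  unfolding Powerset_def
  apply (rule sequent_closed; simp?)
  apply (rule all_R; simp?)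
  apply (rule ex_L[where i=0 and w=200]; simp?)
  apply (rule all_L[where i=1 and y=200]; simp?)
  apply (rule imp_L[where i=4]; simp?)
   apply (rule hyp; simp?)
  apply (rule ex_L[where i=5 and w=400]; simp?)
  apply (rule all_L[where i=2 and y=0]; simp?)
  apply (rule all_L[where i=7 and y=200]; simp?)
  apply (rule all_L[where i=8 and y=400]; simp?)
  apply (rule imp_L[where i=9]; simp?)
   apply (rule hyp; simp?)
  apply (rule hyp; simp?)
  done

definition basic_facts :: "fm list" where
  "basic_facts = [Ext_ren, Pair_ren, Union_ren, SingUnique, UpairUnique, PairUnique, PairInject,
    PairExists, ProductExists, PlOrdMemRelpl, EmptyExists, EmptyPlOrd,
    RelplSubsetsSuperset, RelplSubsetsOrd, RelplSubsetsPlump, RelplSubsetsPlOrd]"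

lemma fv_list_basic_facts[simp]: "fv_list basic_facts = {}"
  by (simp add: basic_facts_def)

lemma proves_basic_facts:
  assumes "i < length basic_facts"
  shows "proves (take i basic_facts) (basic_facts ! i)"
proof -
  have "i < 16" using assms by (simp add: basic_facts_def)
  then consider "i = 0" | "i = 1" | "i = 2" | "i = 3" | "i = 4" | "i = 5" | "i = 6" | "i = 7" | "i = 8"
    | "i = 9" | "i = 10" | "i = 11" | "i = 12" | "i = 13" | "i = 14" | "i = 15"
    by (auto simp: eval_nat_numeral less_Suc_eq)
  then show ?thesis
    by cases (auto simp: basic_facts_def intro: proves_Ext_ren proves_weaken[OF proves_Pair_ren] proves_weaken[OF proves_Union_ren]
      proves_weaken[OF proves_SingUnique] proves_weaken[OF proves_UpairUnique]
      proves_weaken[OF proves_PairUnique] proves_weaken[OF proves_PairInject]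
      proves_weaken[OF proves_PairExists] proves_weaken[OF proves_ProductExists]
      proves_weaken[OF proves_PlOrdMemRelpl] proves_weaken[OF proves_EmptyExists]
      proves_weaken[OF proves_EmptyPlOrd] proves_weaken[OF proves_RelplSubsetsSuperset]
      proves_weaken[OF proves_RelplSubsetsOrd] proves_weaken[OF proves_RelplSubsetsPlump]
      proves_weaken[OF proves_RelplSubsetsPlOrd])
qed

lemma proves_discharge:
  assumes "\<And>i. i < length hs \<Longrightarrow> proves (take i hs) (hs ! i)" and "proves hs g"
  shows "proves [] g"
  using assms
proof (induction hs rule: rev_induct)
  case (snoc h hs)
  have "proves hs h" using snoc.prems(1)[of "length hs"] by simp
  then have "proves hs g" using snoc.prems(2) by (rule proves_cut)
  moreover have "proves (take i hs) (hs ! i)" if "i < length hs" for i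
    using snoc.prems(1)[of i] that by (simp add: nth_append)
  ultimately show ?case using snoc.IH by blast
qed simp

lemma proves_from_basic_facts: "proves basic_facts p \<Longrightarrow> proves [] p"
  by (rule proves_discharge[OF proves_basic_facts])

lemma proves_cut_closed:
  assumes "proves hs a" "proves ks g" "set ks \<subseteq> set (hs @ [a])" "fv_list hs = {}" "fv a = {}"
  shows "proves hs g"
  using assms(1) by (rule proves_cut) (use proves_weaken[OF assms(2,3)] assms(4,5) in simp)

lemma Conj_PlUb_Exponentiation_proves_Powerset:
  "proves (basic_facts @ [Conj PlUb Exponentiation]) Powerset"
proof -
  let ?hs = "basic_facts @ [Conj PlUb Exponentiation]"
  have conj: "proves ?hs (Conj PlUb Exponentiation)" by (rule proves_hyp) simp
  have "proves ?hs (rename (\<lambda>v. v + 9500) id PlUb)"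
    by (rule proves_alpha[OF proves_ConjE1[OF conj]]) (simp_all add: fm_defs)
  then have plub: "proves ?hs PlUb_ren" by (simp add: PlUb_ren_def)
  have "proves ?hs TruthValuesBounded"
    by (rule proves_cut_closed[OF plub PlUb_proves_TruthValuesBounded]) (auto simp: basic_facts_def fm_defs)
  moreover have "proves ?hs BoundedTruthValuesPowerset"
    by (rule proves_cut_closed[OF proves_ConjE2[OF conj] Exponentiation_proves_BoundedTruthValuesPowerset])
      (auto simp: basic_facts_def fm_defs)
  ultimately show ?thesis
    by (rule proves_cut2) (rule proves_weaken[OF bounded_truth_values_prove_Powerset];
      simp add: basic_facts_def fm_defs)
qed

lemma Powerset_proves_Conj_PlUb_Exponentiation:
  "proves (basic_facts @ [Powerset]) (Conj PlUb Exponentiation)"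
proof -
  let ?hs = "basic_facts @ [Powerset]"
  have "proves ?hs (rename (\<lambda>v. v + 9101) id Powerset)"
    by (rule proves_alpha[OF proves_hyp]) (simp_all add: fm_defs)
  then have pow: "proves ?hs Powerset_ren" by (simp add: Powerset_ren_def)
  show ?thesis
  proof (rule proves_ConjI)
    show "proves ?hs PlUb"
      by (rule proves_cut_closed[OF pow Powerset_proves_PlUb]) (auto simp: basic_facts_def fm_defs)
    show "proves ?hs Exponentiation"
      by (rule proves_cut_closed[OF pow Powerset_proves_Exponentiation]) (auto simp: basic_facts_def fm_defs)
  qed
qed

end

theorem lemma3p4:
  shows "deriv IKP (Iff (Conj PlUb Exponentiation) Powerset)"
proof -
  have "proves basic_facts (Iff (Conj PlUb Exponentiation) Powerset)"
    by (rule proves_IffI[OF Conj_PlUb_Exponentiation_proves_Powerset Powerset_proves_Conj_PlUb_Exponentiation])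
  then have "proves [] (Iff (Conj PlUb Exponentiation) Powerset)"
    by (rule proves_from_basic_facts)
  then show ?thesis by (simp add: proves_def)
qed

end
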